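(* Let $\mu$ be a Borel probability measure on $\mathbb{R}^d$ with compact support and a $C^1$ density, let $\rho\in(0,1)$, let $X_1,X_2,\dots$ be i.i.d. with law $\mu$, and $\mu_n=\frac1n\sum_{i=1}^n\delta_{X_i}$. Then almost surely, as $n\to\infty$, \[ \sup_{i=1,\dots,n}\big|\sigma^*_{\rho,\mu_n}(X_i)-\sigma^*_{\rho,\mu}(X_i)\big|\to0. \]
   Context: For a probability measure $\mu$ on $\mathbb{R}^d$: $F_{\rho,\mu}(x,\sigma)=\int w_{x,\sigma}(x')\log w_{x,\sigma}(x')\,d\mu(x')+\log\rho$ with $w_{x,\sigma}(x')=\exp(-\|x-x'\|^2/2\sigma^2)/\int\exp(-\|x-z\|^2/2\sigma^2)\,d\mu(z)$, and $\sigma^*_{\rho,\mu}(x)$ denotes the positive solution $\sigma$ of $F_{\rho,\mu}(x,\sigma)=0$ (similarly for $\mu_n$). *)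

theory Defs
  imports "HOL-Probability.Probability"
begin

definition gauss_w :: "'a::euclidean_space measure \<Rightarrow> 'a \<Rightarrow> real \<Rightarrow> 'a \<Rightarrow> real" where
  "gauss_w \<nu> x \<sigma> x' =
     exp (- (norm (x - x'))\<^sup>2 / (2 * \<sigma>\<^sup>2)) /
     (\<integral>z. exp (- (norm (x - z))\<^sup>2 / (2 * \<sigma>\<^sup>2)) \<partial>\<nu>)"

definition F_fun :: "real \<Rightarrow> 'a::euclidean_space measure \<Rightarrow> 'a \<Rightarrow> real \<Rightarrow> real" where
  "F_fun \<rho> \<nu> x \<sigma> = (\<integral>x'. gauss_w \<nu> x \<sigma> x' * ln (gauss_w \<nu> x \<sigma> x') \<partial>\<nu>) + ln \<rho>"

definition sigma_star :: "real \<Rightarrow> 'a::euclidean_space measure \<Rightarrow> 'a \<Rightarrow> real" where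
  "sigma_star \<rho> \<nu> x = (THE \<sigma>. \<sigma> > 0 \<and> F_fun \<rho> \<nu> x \<sigma> = 0)"

definition emp_measure :: "(nat \<Rightarrow> 'a) \<Rightarrow> nat \<Rightarrow> 'a measure" where
  "emp_measure xs n = measure_pmf (pmf_of_multiset (mset (map xs [0..<n])))"

definition C1_real :: "('a::euclidean_space \<Rightarrow> real) \<Rightarrow> bool" where
  "C1_real f \<longleftrightarrow> (\<exists>f' :: 'a \<Rightarrow> 'a \<Rightarrow>\<^sub>L real.
      (\<forall>x. (f has_derivative blinfun_apply (f' x)) (at x)) \<and> continuous_on UNIV f')"

end

theory Submission
  imports Defs
begin

(* Write b = 1 / (2 * sigma^2) for the precision of the Gaussian kernel around x, Z(b) for its mass
   and m(b) for the kernel mean of |x - z|^2. Then F - ln rho = - b m(b) - ln Z(b) is the negative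
   entropy of the weights; convexity of ln Z (whose derivative is - m) together with the monotonicity
   of m (a covariance inequality) shows that it is nondecreasing in b, strictly unless it vanishes.
   As ln rho < 0, F therefore has at most one positive zero sigma_star in sigma and changes sign
   there. For mu with a continuous density the zero exists at every point of the closed support:
   F < 0 for large sigma, and F > 0 for small sigma because mu has no atoms while small balls
   around support points have positive mass. Moreover sigma_star is continuous there.

   F depends on the measure only through Z and Z m, which are integrals of functions jointly
   continuous in the parameters (x, sigma). Hoeffding's inequality with Borel-Cantelli and a finite
   net of the compact parameter set give their almost sure uniform convergence for the empirical
   measures, hence uniform convergence of F on compact sets of parameters. Bracketing each
   sigma_star(x) between sigma_star(x) - eta and sigma_star(x) + eta, where F has a sign bounded
   away from zero uniformly in x, then yields uniform convergence of the empirical zeros. *)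

lemma compact_Times_equicontinuous:
  fixes H :: "('c::metric_space \<times> 'a::metric_space) \<Rightarrow> real"
  assumes "compact \<Theta>" "compact K" "continuous_on (\<Theta> \<times> K) H" "e > 0"
  shows "\<exists>d>0. \<forall>t\<in>\<Theta>. \<forall>t'\<in>\<Theta>. dist t t' < d \<longrightarrow> (\<forall>z\<in>K. \<bar>H (t, z) - H (t', z)\<bar> < e)"
proof -
  have "uniformly_continuous_on (\<Theta> \<times> K) H"
    using assms by (intro compact_uniformly_continuous compact_Times) auto
  then obtain d where d: "d > 0"
    "\<And>p p'. p \<in> \<Theta> \<times> K \<Longrightarrow> p' \<in> \<Theta> \<times> K \<Longrightarrow> dist p' p < d \<Longrightarrow> dist (H p') (H p) < e"
    using \<open>e > 0\<close> unfolding uniformly_continuous_on_def by metis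
  show ?thesis
  proof (intro exI[of _ d] conjI ballI impI d(1))
    fix t t' z assume "t \<in> \<Theta>" "t' \<in> \<Theta>" "dist t t' < d" "z \<in> K"
    then have "dist (H (t, z)) (H (t', z)) < e"
      by (intro d(2)) (auto simp: dist_Pair_Pair)
    then show "\<bar>H (t, z) - H (t', z)\<bar> < e"
      by (simp add: dist_real_def)
  qed
qed

lemma compact_Times_finite_net:
  fixes H :: "('c::metric_space \<times> 'a::metric_space) \<Rightarrow> real"
  assumes "compact \<Theta>" "compact K" "continuous_on (\<Theta> \<times> K) H" "e > 0"
  shows "\<exists>T. finite T \<and> T \<subseteq> \<Theta> \<and> (\<forall>t\<in>\<Theta>. \<exists>t'\<in>T. \<forall>z\<in>K. \<bar>H (t, z) - H (t', z)\<bar> < e)"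
proof -
  obtain d where d: "0 < d" "\<forall>t\<in>\<Theta>. \<forall>t'\<in>\<Theta>. dist t t' < d \<longrightarrow> (\<forall>z\<in>K. \<bar>H (t, z) - H (t', z)\<bar> < e)"
    using compact_Times_equicontinuous[OF assms] by blast
  have "\<Theta> \<subseteq> (\<Union>t\<in>\<Theta>. ball t d)"
    using d(1) by auto
  then obtain T where T: "T \<subseteq> \<Theta>" "finite T" "\<Theta> \<subseteq> (\<Union>t\<in>T. ball t d)"
    using compactE_image[OF assms(1), where C = \<Theta> and f = "\<lambda>t. ball t d"] by auto
  moreover have "\<exists>t'\<in>T. \<forall>z\<in>K. \<bar>H (t, z) - H (t', z)\<bar> < e" if t: "t \<in> \<Theta>" for t
  proof -
    obtain t' where t': "t' \<in> T" "t \<in> ball t' d"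
      using T(3) t by blast
    moreover have "t' \<in> \<Theta>" "dist t t' < d"
      using T(1) t' by (auto simp: dist_commute)
    ultimately show ?thesis
      using d(2) t by blast
  qed
  ultimately show ?thesis
    by blast
qed

lemma uniform_limit_Pair:
  fixes f :: "'n \<Rightarrow> 'c \<Rightarrow> 'd::metric_space" and g :: "'n \<Rightarrow> 'c \<Rightarrow> 'e::metric_space"
  assumes "uniform_limit A f l F" "uniform_limit A g m F"
  shows "uniform_limit A (\<lambda>n x. (f n x, g n x)) (\<lambda>x. (l x, m x)) F"
proof (rule uniform_limitI)
  fix e :: real assume "0 < e"
  then have "\<forall>\<^sub>F n in F. \<forall>x\<in>A. dist (f n x) (l x) < e / 2" "\<forall>\<^sub>F n in F. \<forall>x\<in>A. dist (g n x) (m x) < e / 2"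
    by (intro uniform_limitD[OF assms(1)] uniform_limitD[OF assms(2)]; simp)+
  then show "\<forall>\<^sub>F n in F. \<forall>x\<in>A. dist (f n x, g n x) (l x, m x) < e"
  proof eventually_elim
    case (elim n)
    show ?case
    proof
      fix x assume "x \<in> A"
      have "dist (f n x, g n x) (l x, m x) \<le> \<bar>dist (f n x) (l x)\<bar> + \<bar>dist (g n x) (m x)\<bar>"
        unfolding dist_Pair_Pair by (rule sqrt_sum_squares_le_sum_abs)
      then show "dist (f n x, g n x) (l x, m x) < e"
        using elim \<open>x \<in> A\<close> by fastforce
    qed
  qed
qed

lemma abs_average_diff_le:
  fixes a b :: "nat \<Rightarrow> real"
  assumes "0 < n" "\<forall>j<n. \<bar>a j - b j\<bar> \<le> \<eta>"
  shows "\<bar>(\<Sum>j<n. a j) / n - (\<Sum>j<n. b j) / n\<bar> \<le> \<eta>"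
proof -
  have "\<bar>(\<Sum>j<n. a j) - (\<Sum>j<n. b j)\<bar> \<le> (\<Sum>j<n. \<bar>a j - b j\<bar>)"
    by (metis sum_abs sum_subtractf)
  also have "\<dots> \<le> n * \<eta>"
    using sum_mono[of "{..<n}" "\<lambda>j. \<bar>a j - b j\<bar>" "\<lambda>_. \<eta>"] assms(2) by simp
  finally show ?thesis
    using assms(1) by (simp add: diff_divide_distrib[symmetric] divide_simps mult.commute)
qed

lemma Max_abs_diff_tendsto_0:
  fixes g :: "nat \<Rightarrow> 'a \<Rightarrow> real"
  assumes "uniform_limit S g h sequentially" "\<forall>i. xs i \<in> S"
  shows "(\<lambda>n. Max ((\<lambda>i. \<bar>g n (xs i) - h (xs i)\<bar>) ` {..<n})) \<longlonglongrightarrow> 0"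
proof (rule tendstoI)
  fix e :: real assume "0 < e"
  with uniform_limitD[OF assms(1)] have "\<forall>\<^sub>F n in sequentially. \<forall>x\<in>S. dist (g n x) (h x) < e"
    by blast
  with eventually_gt_at_top[of 0]
  show "\<forall>\<^sub>F n in sequentially. dist (Max ((\<lambda>i. \<bar>g n (xs i) - h (xs i)\<bar>) ` {..<n})) 0 < e"
  proof eventually_elim
    case (elim n)
    define A where "A = (\<lambda>i. \<bar>g n (xs i) - h (xs i)\<bar>) ` {..<n}"
    have A: "finite A" "A \<noteq> {}"
      using elim(1) by (auto simp: A_def)
    have "Max A < e"
      using A elim(2) assms(2) by (auto simp: A_def dist_real_def)
    moreover have "0 \<le> Max A"
    proof -
      obtain a where "a \<in> A"
        using A(2) by blast
      moreover have "0 \<le> a"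
        using \<open>a \<in> A\<close> by (auto simp: A_def)
      ultimately show ?thesis
        using Max_ge[OF A(1)] by force
    qed
    ultimately show ?case
      by (simp add: A_def[symmetric])
  qed
qed

lemma mult_ln_ge_tangent:
  fixes t c :: real
  assumes "0 < t" "0 < c"
  shows "ln c * t + t - c \<le> t * ln t"
proof -
  have "ln (c / t) \<le> c / t - 1"
    using assms by (intro ln_le_minus_one) auto
  then have "t * (ln c - ln t) \<le> t * (c / t - 1)"
    using assms by (intro mult_left_mono) (auto simp: ln_div)
  then show ?thesis
    using assms by (simp add: algebra_simps)
qed

lemma diff_mult_exp_diff_nonpos:
  fixes c m t :: real
  assumes "0 \<le> c"
  shows "(t - m) * (exp (- c * t) - exp (- c * m)) \<le> 0"
proof (cases "t \<le> m")
  case True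
  then have "exp (- c * m) \<le> exp (- c * t)"
    using assms by (simp add: mult_left_mono)
  with True show ?thesis by (simp add: mult_nonpos_nonneg)
next
  case False
  then have "exp (- c * t) \<le> exp (- c * m)"
    using assms by (simp add: mult_left_mono)
  with False show ?thesis by (simp add: mult_nonneg_nonpos)
qed

lemma diff_mult_exp_diff_neg:
  fixes c m t :: real
  assumes "0 < c" "t \<noteq> m"
  shows "(t - m) * (exp (- c * t) - exp (- c * m)) < 0"
  using diff_mult_exp_diff_nonpos[of c t m] assms by (auto simp: order_less_le)

section \<open>Gaussian kernel statistics\<close>

text \<open>Kernels are parametrised by the precision \<open>b = 1 / (2 * \<sigma>\<^sup>2)\<close>; \<open>gauss_neg_entropy M x b\<close> is the
  integral of \<open>w ln w\<close> in \<open>F_fun\<close>.\<close>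

definition gauss_mass :: "'a::euclidean_space measure \<Rightarrow> 'a \<Rightarrow> real \<Rightarrow> real" where
  "gauss_mass M x b = (\<integral>z. exp (- b * (norm (x - z))\<^sup>2) \<partial>M)"

definition gauss_moment :: "'a::euclidean_space measure \<Rightarrow> 'a \<Rightarrow> real \<Rightarrow> real" where
  "gauss_moment M x b = (\<integral>z. (norm (x - z))\<^sup>2 * exp (- b * (norm (x - z))\<^sup>2) \<partial>M)"

definition gauss_mean :: "'a::euclidean_space measure \<Rightarrow> 'a \<Rightarrow> real \<Rightarrow> real" where
  "gauss_mean M x b = gauss_moment M x b / gauss_mass M x b"

definition gauss_neg_entropy :: "'a::euclidean_space measure \<Rightarrow> 'a \<Rightarrow> real \<Rightarrow> real" where
  "gauss_neg_entropy M x b = - b * gauss_mean M x b - ln (gauss_mass M x b)"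

definition kernel_stats :: "'a::euclidean_space measure \<Rightarrow> 'a \<times> real \<Rightarrow> real \<times> real \<times> real" where
  "kernel_stats M t = (gauss_mass M (fst t) (1 / (2 * (snd t)\<^sup>2)), gauss_moment M (fst t) (1 / (2 * (snd t)\<^sup>2)), snd t)"

definition F_of_stats :: "real \<Rightarrow> real \<times> real \<times> real \<Rightarrow> real" where
  "F_of_stats \<rho> p = (case p of (Z, A, \<sigma>) \<Rightarrow> - (1 / (2 * \<sigma>\<^sup>2)) * A / Z - ln Z + ln \<rho>)"

text \<open>Only \<open>sets borel \<subseteq> sets M\<close> is required, so that the empirical measures, on which every set
  is measurable, are instances as well as \<open>\<mu>\<close>.\<close>

locale compactly_supported_prob_space = prob_space M for M :: "'a::euclidean_space measure" +
  fixes K :: "'a set"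
  assumes sets_borel_subset: "sets borel \<subseteq> sets M"
    and compact_support: "compact K"
    and AE_in_support: "AE z in M. z \<in> K"
begin

lemma space_eq_UNIV: "space M = UNIV"
proof -
  have "UNIV \<in> sets M"
    using sets_borel_subset by auto
  then show ?thesis
    using sets.sets_into_space by blast
qed

lemma borel_measurable_from_borel:
  assumes "h \<in> borel_measurable borel"
  shows "h \<in> borel_measurable M"
  unfolding measurable_def
  using measurable_sets[OF assms] sets_borel_subset by (auto simp: space_eq_UNIV)

lemma integrable_continuous:
  fixes h :: "'a \<Rightarrow> real"
  assumes "continuous_on UNIV h"
  shows "integrable M h"
proof -
  have "bounded (h ` K)"
    using assms compact_support
    by (intro compact_imp_bounded compact_continuous_image) (auto intro: continuous_on_subset)
  then obtain C where C: "\<And>z. z \<in> K \<Longrightarrow> norm (h z) \<le> C"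
    unfolding bounded_iff by auto
  show ?thesis
  proof (rule Bochner_Integration.integrable_bound[where f = "\<lambda>_. C"])
    show "h \<in> borel_measurable M"
      using assms by (intro borel_measurable_from_borel borel_measurable_continuous_onI)
    show "AE z in M. norm (h z) \<le> norm C"
      using AE_in_support by eventually_elim (metis C abs_ge_self order_trans real_norm_def)
  qed simp
qed

lemma integrable_gauss [simp]: "integrable M (\<lambda>z. exp (- (b * (norm (x - z))\<^sup>2)))"
  by (intro integrable_continuous continuous_intros)

lemma integrable_gauss_moment [simp]:
  "integrable M (\<lambda>z. (norm (x - z))\<^sup>2 * exp (- (b * (norm (x - z))\<^sup>2)))"
  by (intro integrable_continuous continuous_intros)

lemma integrable_indicator_mult:
  fixes f :: "'a \<Rightarrow> real"
  assumes "A \<in> sets borel" "continuous_on UNIV f"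
  shows "integrable M (\<lambda>z. indicator A z * f z)"
  using integrable_mult_indicator[of A M f] assms sets_borel_subset integrable_continuous by auto

lemma abs_integral_diff_le:
  fixes g1 g2 :: "'a \<Rightarrow> real"
  assumes "continuous_on UNIV g1" "continuous_on UNIV g2" "\<forall>z\<in>K. \<bar>g1 z - g2 z\<bar> \<le> \<eta>"
  shows "\<bar>(\<integral>z. g1 z \<partial>M) - (\<integral>z. g2 z \<partial>M)\<bar> \<le> \<eta>"
proof -
  have i1: "integrable M g1" and i2: "integrable M g2"
    using assms(1,2) by (auto intro: integrable_continuous)
  have i: "integrable M (\<lambda>z. g1 z - g2 z)"
    using i1 i2 by (rule Bochner_Integration.integrable_diff)
  have ae: "AE z in M. \<bar>g1 z - g2 z\<bar> \<le> \<eta>"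
    using AE_in_support by eventually_elim (use assms(3) in auto)
  have "(\<integral>z. g1 z - g2 z \<partial>M) \<le> \<eta>"
    by (rule integral_le_const[OF i]) (use ae in \<open>eventually_elim, arith\<close>)
  moreover have "(\<integral>z. g1 z - g2 z \<partial>M) \<ge> - \<eta>"
    by (rule integral_ge_const[OF i]) (use ae in \<open>eventually_elim, arith\<close>)
  ultimately show ?thesis
    by (simp add: Bochner_Integration.integral_diff[OF i1 i2])
qed

lemma borel_measurable_sqdist [measurable]: "(\<lambda>z. (norm (x - z))\<^sup>2) \<in> borel_measurable M"
  by (intro borel_measurable_from_borel borel_measurable_continuous_onI continuous_intros)

lemma integral_gauss_lincomb:
  "(\<integral>z. \<alpha> * exp (- (b * (norm (x - z))\<^sup>2)) + \<beta> * ((norm (x - z))\<^sup>2 * exp (- (b * (norm (x - z))\<^sup>2))) \<partial>M)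
     = \<alpha> * gauss_mass M x b + \<beta> * gauss_moment M x b"
  by (simp add: gauss_mass_def gauss_moment_def)

lemma gauss_mass_pos: "0 < gauss_mass M x b"
  unfolding gauss_mass_def by (rule expectation_greater) auto

lemma gauss_moment_nonneg: "0 \<le> gauss_moment M x b"
  unfolding gauss_moment_def by (rule integral_nonneg_AE) auto

lemma gauss_mean_nonneg: "0 \<le> gauss_mean M x b"
  unfolding gauss_mean_def using gauss_moment_nonneg gauss_mass_pos by (simp add: less_imp_le)

lemma gauss_moment_eq: "gauss_moment M x b = gauss_mean M x b * gauss_mass M x b"
  using gauss_mass_pos[of x b] by (simp add: gauss_mean_def)

lemma support_dist_bounded:
  assumes "bounded C"
  shows "\<exists>R. \<forall>x\<in>C. \<forall>z\<in>K. norm (x - z) \<le> R"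
proof -
  obtain B1 where B1: "\<forall>x\<in>C. norm x \<le> B1"
    using assms unfolding bounded_iff by blast
  obtain B2 where B2: "\<forall>z\<in>K. norm z \<le> B2"
    using compact_imp_bounded[OF compact_support] unfolding bounded_iff by blast
  have "\<forall>x\<in>C. \<forall>z\<in>K. norm (x - z) \<le> B1 + B2"
    using B1 B2 by (meson add_mono norm_triangle_ineq4 order_trans)
  then show ?thesis ..
qed

lemma gauss_mass_le_1:
  assumes "0 \<le> b"
  shows "gauss_mass M x b \<le> 1"
  unfolding gauss_mass_def using assms by (intro integral_le_const AE_I2) auto

lemma gauss_mass_ge:
  assumes "0 \<le> b" "\<forall>z\<in>K. norm (x - z) \<le> R"
  shows "exp (- b * R\<^sup>2) \<le> gauss_mass M x b"
  unfolding gauss_mass_def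
proof (intro integral_ge_const)
  show "AE z in M. exp (- b * R\<^sup>2) \<le> exp (- b * (norm (x - z))\<^sup>2)"
    using AE_in_support
  proof eventually_elim
    case (elim z)
    then have "(norm (x - z))\<^sup>2 \<le> R\<^sup>2"
      using assms(2) by (intro power_mono) auto
    then show ?case
      using assms(1) by (simp add: mult_left_mono)
  qed
qed simp

lemma gauss_moment_le:
  assumes "0 \<le> b" "\<forall>z\<in>K. norm (x - z) \<le> R"
  shows "gauss_moment M x b \<le> R\<^sup>2"
  unfolding gauss_moment_def
proof (intro integral_le_const)
  show "AE z in M. (norm (x - z))\<^sup>2 * exp (- b * (norm (x - z))\<^sup>2) \<le> R\<^sup>2"
    using AE_in_support
  proof eventually_elim
    case (elim z)
    then have "(norm (x - z))\<^sup>2 \<le> R\<^sup>2"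
      using assms(2) by (intro power_mono) auto
    moreover have "exp (- b * (norm (x - z))\<^sup>2) \<le> 1"
      using assms(1) by simp
    ultimately show ?case
      by (meson exp_ge_zero mult_left_le order_trans zero_le_power2)
  qed
qed simp

lemma kernel_stats_bounds:
  assumes "\<forall>z\<in>K. norm (fst t - z) \<le> R" "0 < a" "a \<le> snd t"
  shows "kernel_stats M t \<in> {exp (- R\<^sup>2 / (2 * a\<^sup>2))..1} \<times> {0..R\<^sup>2} \<times> {a..snd t}"
proof -
  have "R\<^sup>2 / (2 * (snd t)\<^sup>2) \<le> R\<^sup>2 / (2 * a\<^sup>2)"
    using assms(2,3) by (intro divide_left_mono mult_left_mono power_mono) auto
  then have "exp (- R\<^sup>2 / (2 * a\<^sup>2)) \<le> exp (- (1 / (2 * (snd t)\<^sup>2)) * R\<^sup>2)"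
    by simp
  then show ?thesis
    using order_trans[OF _ gauss_mass_ge[OF _ assms(1)]] gauss_mass_le_1 gauss_moment_nonneg
      gauss_moment_le[OF _ assms(1)] assms(3)
    by (auto simp: kernel_stats_def)
qed

subsection \<open>Monotonicity in the precision\<close>

lemma ln_gauss_mass_convex:
  "ln (gauss_mass M x b2) + (b2 - b1) * gauss_mean M x b2 \<le> ln (gauss_mass M x b1)"
proof -
  define c where "c = b2 - b1"
  define m where "m = gauss_mean M x b2"
  have "exp (c * m) * (1 - c * m) * exp (- (b2 * (norm (x - z))\<^sup>2))
        + exp (c * m) * c * ((norm (x - z))\<^sup>2 * exp (- (b2 * (norm (x - z))\<^sup>2)))
      \<le> exp (- (b1 * (norm (x - z))\<^sup>2))" for z
  proof -
    define D where "D = (norm (x - z))\<^sup>2"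
    have "exp (c * m) * (1 + c * (D - m)) \<le> exp (c * m) * exp (c * (D - m))"
      by (intro mult_left_mono exp_ge_add_one_self) auto
    also have "\<dots> = exp (c * D)"
      by (simp add: exp_add[symmetric] algebra_simps)
    finally have "exp (c * m) * (1 + c * (D - m)) * exp (- (b2 * D)) \<le> exp (c * D) * exp (- (b2 * D))"
      by (intro mult_right_mono) auto
    then show ?thesis
      by (simp add: D_def[symmetric] c_def exp_add[symmetric] algebra_simps)
  qed
  then have "exp (c * m) * (1 - c * m) * gauss_mass M x b2 + exp (c * m) * c * gauss_moment M x b2
      \<le> gauss_mass M x b1"
    unfolding integral_gauss_lincomb[symmetric] gauss_mass_def[of M x b1] by (intro integral_mono) auto
  then have "exp (c * m) * gauss_mass M x b2 \<le> gauss_mass M x b1"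
    by (simp add: m_def gauss_moment_eq algebra_simps)
  then have "ln (exp (c * m) * gauss_mass M x b2) \<le> ln (gauss_mass M x b1)"
    using gauss_mass_pos by (subst ln_le_cancel_iff) auto
  then show ?thesis
    using gauss_mass_pos[of x b2] by (simp add: ln_mult c_def m_def)
qed

lemma gauss_moment_covariance:
  "gauss_moment M x b2 - gauss_mean M x b1 * gauss_mass M x b2
     = (\<integral>z. ((norm (x - z))\<^sup>2 - gauss_mean M x b1)
            * (exp (- (b2 - b1) * (norm (x - z))\<^sup>2) - exp (- (b2 - b1) * gauss_mean M x b1))
            * exp (- b1 * (norm (x - z))\<^sup>2) \<partial>M)"
proof -
  define m where "m = gauss_mean M x b1"
  define e where "e = exp (- (b2 - b1) * m)"
  have split: "((norm (x - z))\<^sup>2 - m) * (exp (- (b2 - b1) * (norm (x - z))\<^sup>2) - e) * exp (- b1 * (norm (x - z))\<^sup>2)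
      = ((- m) * exp (- (b2 * (norm (x - z))\<^sup>2)) + 1 * ((norm (x - z))\<^sup>2 * exp (- (b2 * (norm (x - z))\<^sup>2))))
        + ((e * m) * exp (- (b1 * (norm (x - z))\<^sup>2)) + (- e) * ((norm (x - z))\<^sup>2 * exp (- (b1 * (norm (x - z))\<^sup>2))))"
    for z
    by (simp add: algebra_simps flip: exp_add)
  have "(\<integral>z. ((norm (x - z))\<^sup>2 - m) * (exp (- (b2 - b1) * (norm (x - z))\<^sup>2) - e) * exp (- b1 * (norm (x - z))\<^sup>2) \<partial>M)
      = (- m * gauss_mass M x b2 + gauss_moment M x b2) + (e * m * gauss_mass M x b1 - e * gauss_moment M x b1)"
    unfolding split
    by (subst Bochner_Integration.integral_add) (auto simp only: integral_gauss_lincomb integrable_gauss integrable_gauss_moment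
        intro!: Bochner_Integration.integrable_add integrable_mult_right)
  also have "\<dots> = gauss_moment M x b2 - m * gauss_mass M x b2"
    by (simp add: m_def gauss_moment_eq[of x b1])
  finally show ?thesis
    by (simp add: e_def m_def)
qed

lemma gauss_mean_antimono:
  assumes "b1 \<le> b2"
  shows "gauss_mean M x b2 \<le> gauss_mean M x b1"
proof -
  have "gauss_moment M x b2 - gauss_mean M x b1 * gauss_mass M x b2 \<le> 0"
    unfolding gauss_moment_covariance using assms
    by (intro integral_le_const AE_I2 mult_nonpos_nonneg diff_mult_exp_diff_nonpos
        integrable_continuous continuous_intros) auto
  then show ?thesis
    using gauss_mass_pos[of x b2] by (simp add: gauss_moment_eq)
qed

lemma gauss_mean_strict_antimono:
  assumes "b1 < b2" and "\<not> (AE z in M. (norm (x - z))\<^sup>2 = gauss_mean M x b1)"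
  shows "gauss_mean M x b2 < gauss_mean M x b1"
proof -
  define m where "m = gauss_mean M x b1"
  define k where "k z = ((norm (x - z))\<^sup>2 - m) * (exp (- (b2 - b1) * (norm (x - z))\<^sup>2) - exp (- (b2 - b1) * m))
      * exp (- b1 * (norm (x - z))\<^sup>2)" for z
  define S where "S = {z \<in> space M. (norm (x - z))\<^sup>2 \<noteq> m}"
  have S: "S \<in> sets M"
    unfolding S_def by measurable
  have "emeasure M S \<noteq> 0"
    using assms(2) AE_iff_measurable[OF S, of "\<lambda>z. (norm (x - z))\<^sup>2 = m"] by (auto simp: S_def m_def)
  moreover have "k z < 0" if "z \<in> S" for z
    using that assms(1) diff_mult_exp_diff_neg[of "b2 - b1" "(norm (x - z))\<^sup>2" m]
    by (auto simp: k_def S_def mult_less_0_iff)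
  moreover have "k z \<le> 0" for z
    using assms(1) unfolding k_def by (intro mult_nonpos_nonneg diff_mult_exp_diff_nonpos) auto
  moreover have "integrable M k"
    unfolding k_def by (intro integrable_continuous continuous_intros)
  ultimately have "integral\<^sup>L M k < integral\<^sup>L M (\<lambda>_. 0)"
    by (intro integral_less_AE[OF _ _ _ S]) (auto intro!: AE_I2 simp: less_imp_neq)
  moreover have "gauss_moment M x b2 - m * gauss_mass M x b2 = integral\<^sup>L M k"
    unfolding k_def m_def by (rule gauss_moment_covariance)
  ultimately have "gauss_moment M x b2 - m * gauss_mass M x b2 < 0"
    by simp
  then show ?thesis
    using gauss_mass_pos[of x b2] by (simp add: gauss_moment_eq m_def)
qed

lemma gauss_neg_entropy_eq_0:
  assumes "AE z in M. (norm (x - z))\<^sup>2 = m"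
  shows "gauss_neg_entropy M x b = 0"
proof -
  have "gauss_mass M x b = exp (- b * m)"
    unfolding gauss_mass_def using assms
    by (subst integral_cong_AE[where g = "\<lambda>_. exp (- b * m)"]) (auto simp: prob_space intro!: borel_measurable_integrable)
  moreover have "gauss_moment M x b = m * exp (- b * m)"
    unfolding gauss_moment_def using assms
    by (subst integral_cong_AE[where g = "\<lambda>_. m * exp (- b * m)"]) (auto simp: prob_space intro!: borel_measurable_integrable)
  ultimately show ?thesis
    by (simp add: gauss_neg_entropy_def gauss_mean_def)
qed

lemma gauss_neg_entropy_increment:
  "b1 * (gauss_mean M x b1 - gauss_mean M x b2) \<le> gauss_neg_entropy M x b2 - gauss_neg_entropy M x b1"
  using ln_gauss_mass_convex[of x b2 b1] by (simp add: gauss_neg_entropy_def algebra_simps)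

lemma gauss_neg_entropy_mono:
  assumes "0 \<le> b1" "b1 \<le> b2"
  shows "gauss_neg_entropy M x b1 \<le> gauss_neg_entropy M x b2"
  using gauss_neg_entropy_increment[of b1 x b2] gauss_mean_antimono[OF assms(2), of x] assms(1)
  by (smt (verit) mult_nonneg_nonneg)

lemma gauss_neg_entropy_strict_mono:
  assumes "0 < b1" "b1 < b2" "gauss_neg_entropy M x b1 \<noteq> 0"
  shows "gauss_neg_entropy M x b1 < gauss_neg_entropy M x b2"
proof -
  have "gauss_mean M x b2 < gauss_mean M x b1"
    using assms gauss_neg_entropy_eq_0 by (intro gauss_mean_strict_antimono) blast+
  then show ?thesis
    using gauss_neg_entropy_increment[of b1 x b2] assms(1) by (smt (verit) mult_pos_pos)
qed

lemma gauss_neg_entropy_eq_integral: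
  "gauss_neg_entropy M x b
     = (\<integral>z. exp (- b * (norm (x - z))\<^sup>2) / gauss_mass M x b * ln (exp (- b * (norm (x - z))\<^sup>2) / gauss_mass M x b) \<partial>M)"
proof -
  define Z where "Z = gauss_mass M x b"
  have Z: "Z > 0"
    unfolding Z_def by (rule gauss_mass_pos)
  have "exp (- b * (norm (x - z))\<^sup>2) / Z * ln (exp (- b * (norm (x - z))\<^sup>2) / Z)
      = (- ln Z / Z) * exp (- (b * (norm (x - z))\<^sup>2)) + (- b / Z) * ((norm (x - z))\<^sup>2 * exp (- (b * (norm (x - z))\<^sup>2)))"
    for z
    using Z by (simp add: ln_div field_simps)
  then have "(\<integral>z. exp (- b * (norm (x - z))\<^sup>2) / Z * ln (exp (- b * (norm (x - z))\<^sup>2) / Z) \<partial>M)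
      = (- ln Z / Z) * Z + (- b / Z) * gauss_moment M x b"
    by (simp only: integral_gauss_lincomb Z_def)
  also have "\<dots> = gauss_neg_entropy M x b"
    using Z by (simp add: gauss_neg_entropy_def gauss_mean_def Z_def)
  finally show ?thesis
    by (simp add: Z_def)
qed

lemma F_fun_eq_gauss_neg_entropy:
  assumes "\<sigma> \<noteq> 0"
  shows "F_fun \<rho> M x \<sigma> = gauss_neg_entropy M x (1 / (2 * \<sigma>\<^sup>2)) + ln \<rho>"
proof -
  have "gauss_w M x \<sigma> z = exp (- (1 / (2 * \<sigma>\<^sup>2)) * (norm (x - z))\<^sup>2) / gauss_mass M x (1 / (2 * \<sigma>\<^sup>2))" for z
    by (simp add: gauss_w_def gauss_mass_def)
  then show ?thesis
    unfolding F_fun_def gauss_neg_entropy_eq_integral by simp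
qed

lemma F_fun_eq_F_of_stats:
  assumes "snd t \<noteq> 0"
  shows "F_fun \<rho> M (fst t) (snd t) = F_of_stats \<rho> (kernel_stats M t)"
  using assms
  by (simp add: F_fun_eq_gauss_neg_entropy F_of_stats_def kernel_stats_def gauss_neg_entropy_def gauss_mean_def)

lemma F_fun_at_precision:
  assumes "0 < b"
  shows "F_fun \<rho> M x (sqrt (1 / (2 * b))) = gauss_neg_entropy M x b + ln \<rho>"
  using assms by (simp add: F_fun_eq_gauss_neg_entropy)

lemma F_fun_antimono:
  assumes "0 < s1" "s1 \<le> s2"
  shows "F_fun \<rho> M x s2 \<le> F_fun \<rho> M x s1"
proof -
  have "1 / (2 * s2\<^sup>2) \<le> 1 / (2 * s1\<^sup>2)"
    using assms by (intro divide_left_mono mult_left_mono power_mono) auto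
  then show ?thesis
    using gauss_neg_entropy_mono[of "1 / (2 * s2\<^sup>2)" "1 / (2 * s1\<^sup>2)" x] assms
    by (simp add: F_fun_eq_gauss_neg_entropy)
qed

lemma F_fun_strict_antimono:
  assumes "0 < s1" "s1 < s2" "F_fun \<rho> M x s2 \<noteq> ln \<rho>"
  shows "F_fun \<rho> M x s2 < F_fun \<rho> M x s1"
proof -
  have "1 / (2 * s2\<^sup>2) < 1 / (2 * s1\<^sup>2)"
    using assms by (intro divide_strict_left_mono mult_strict_left_mono power_strict_mono) auto
  then show ?thesis
    using gauss_neg_entropy_strict_mono[of "1 / (2 * s2\<^sup>2)" "1 / (2 * s1\<^sup>2)" x] assms
    by (simp add: F_fun_eq_gauss_neg_entropy)
qed

subsection \<open>Continuity and uniform convergence\<close>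

lemma continuous_on_integral_param:
  fixes H :: "('c::metric_space \<times> 'a) \<Rightarrow> real"
  assumes "compact \<Theta>" "continuous_on (\<Theta> \<times> K) H" "\<And>t. t \<in> \<Theta> \<Longrightarrow> continuous_on UNIV (\<lambda>z. H (t, z))"
  shows "continuous_on \<Theta> (\<lambda>t. \<integral>z. H (t, z) \<partial>M)"
  unfolding continuous_on_iff
proof (intro ballI allI impI)
  fix t e assume t: "t \<in> \<Theta>" and e: "(0::real) < e"
  obtain d where d: "d > 0"
    "\<And>t t'. t \<in> \<Theta> \<Longrightarrow> t' \<in> \<Theta> \<Longrightarrow> dist t t' < d \<Longrightarrow> \<forall>z\<in>K. \<bar>H (t, z) - H (t', z)\<bar> < e / 2"
    using compact_Times_equicontinuous[OF assms(1) compact_support assms(2), of "e / 2"] e by auto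
  show "\<exists>d>0. \<forall>t'\<in>\<Theta>. dist t' t < d \<longrightarrow> dist (\<integral>z. H (t', z) \<partial>M) (\<integral>z. H (t, z) \<partial>M) < e"
  proof (intro exI[of _ d] conjI ballI impI d(1))
    fix t' assume t': "t' \<in> \<Theta>" "dist t' t < d"
    have "\<bar>(\<integral>z. H (t', z) \<partial>M) - (\<integral>z. H (t, z) \<partial>M)\<bar> \<le> e / 2"
      using d(2)[OF t'(1) t t'(2)] by (intro abs_integral_diff_le assms(3) t t'(1)) (auto intro: less_imp_le)
    then show "dist (\<integral>z. H (t', z) \<partial>M) (\<integral>z. H (t, z) \<partial>M) < e"
      using e by (simp add: dist_real_def)
  qed
qed

lemma continuous_on_gauss_integral:
  fixes p :: "'c::metric_space \<Rightarrow> 'a" and q :: "'c \<Rightarrow> real" and g :: "real \<Rightarrow> real"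
  assumes "compact \<Theta>" "continuous_on \<Theta> p" "continuous_on \<Theta> q" "continuous_on UNIV g"
  shows "continuous_on \<Theta> (\<lambda>t. \<integral>z. g ((norm (p t - z))\<^sup>2) * exp (- q t * (norm (p t - z))\<^sup>2) \<partial>M)"
proof -
  have fst: "continuous_on (\<Theta> \<times> K) fst"
    by (intro continuous_intros)
  have "continuous_on (\<Theta> \<times> K) (\<lambda>u. p (fst u))" "continuous_on (\<Theta> \<times> K) (\<lambda>u. q (fst u))"
    by (auto intro!: continuous_on_compose2[OF assms(2) fst] continuous_on_compose2[OF assms(3) fst])
  then have "continuous_on \<Theta> (\<lambda>t. \<integral>z. (\<lambda>u. g ((norm (p (fst u) - snd u))\<^sup>2) * exp (- q (fst u) * (norm (p (fst u) - snd u))\<^sup>2)) (t, z) \<partial>M)"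
    by (intro continuous_on_integral_param assms(1) continuous_intros
        continuous_on_compose2[OF assms(4)]) auto
  then show ?thesis
    by simp
qed

lemma continuous_on_gauss_mass:
  fixes p :: "'c::metric_space \<Rightarrow> 'a" and q :: "'c \<Rightarrow> real"
  assumes "compact \<Theta>" "continuous_on \<Theta> p" "continuous_on \<Theta> q"
  shows "continuous_on \<Theta> (\<lambda>t. gauss_mass M (p t) (q t))"
  using continuous_on_gauss_integral[OF assms, of "\<lambda>_. 1"] by (simp add: gauss_mass_def)

lemma continuous_on_gauss_moment:
  fixes p :: "'c::metric_space \<Rightarrow> 'a" and q :: "'c \<Rightarrow> real"
  assumes "compact \<Theta>" "continuous_on \<Theta> p" "continuous_on \<Theta> q"
  shows "continuous_on \<Theta> (\<lambda>t. gauss_moment M (p t) (q t))"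
  using continuous_on_gauss_integral[OF assms, of "\<lambda>d. d"] by (simp add: gauss_moment_def)

lemma continuous_on_F_fun:
  assumes "0 < a" "compact C"
  shows "continuous_on (C \<times> {a..b}) (\<lambda>t. F_fun \<rho> M (fst t) (snd t))"
proof -
  have \<Theta>: "compact (C \<times> {a..b})"
    using assms(2) by (intro compact_Times) auto
  have pos: "snd t \<noteq> 0" if "t \<in> C \<times> {a..b}" for t
    using that assms(1) by auto
  have "continuous_on (C \<times> {a..b}) (\<lambda>t. - (1 / (2 * (snd t)\<^sup>2)) * gauss_moment M (fst t) (1 / (2 * (snd t)\<^sup>2))
      / gauss_mass M (fst t) (1 / (2 * (snd t)\<^sup>2)) - ln (gauss_mass M (fst t) (1 / (2 * (snd t)\<^sup>2))) + ln \<rho>)"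
    using gauss_mass_pos pos
    by (intro continuous_intros continuous_on_gauss_mass continuous_on_gauss_moment \<Theta>)
       (auto simp: less_imp_neq[symmetric])
  then show ?thesis
    by (rule continuous_on_eq)
       (use pos in \<open>simp add: F_fun_eq_gauss_neg_entropy gauss_neg_entropy_def gauss_mean_def\<close>)
qed

lemma continuous_on_F_fun_at:
  assumes "0 < s" "compact C"
  shows "continuous_on C (\<lambda>y. F_fun \<rho> M y s)"
proof -
  have "continuous_on C (\<lambda>y. (\<lambda>t. F_fun \<rho> M (fst t) (snd t)) (y, s))"
    by (rule continuous_on_compose2[OF continuous_on_F_fun[OF assms, of s \<rho>]])
       (auto intro!: continuous_intros)
  then show ?thesis
    by simp
qed

lemma continuous_on_F_fun_sigma:
  assumes "0 < a"
  shows "continuous_on {a..b} (F_fun \<rho> M x)"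
proof -
  have "continuous_on {a..b} (\<lambda>s. (\<lambda>t. F_fun \<rho> M (fst t) (snd t)) (x, s))"
    by (rule continuous_on_compose2[OF continuous_on_F_fun[OF assms, of "{x}" b \<rho>]])
       (auto intro!: continuous_intros)
  then show ?thesis
    by simp
qed

lemma eventually_average_close_of_net:
  fixes H :: "'c \<times> 'a \<Rightarrow> real"
  assumes xs: "\<forall>j. xs j \<in> K" and H: "\<And>t. t \<in> \<Theta> \<Longrightarrow> continuous_on UNIV (\<lambda>z. H (t, z))"
    and T: "finite T" "T \<subseteq> \<Theta>" "\<forall>t\<in>\<Theta>. \<exists>t'\<in>T. \<forall>z\<in>K. \<bar>H (t, z) - H (t', z)\<bar> < \<eta>"
    and \<eta>: "0 < \<eta>" and lim: "\<forall>t\<in>T. (\<lambda>n. (\<Sum>j<n. H (t, xs j)) / n) \<longlonglongrightarrow> (\<integral>z. H (t, z) \<partial>M)"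
  shows "\<forall>\<^sub>F n in sequentially. \<forall>t\<in>\<Theta>. \<bar>(\<Sum>j<n. H (t, xs j)) / n - (\<integral>z. H (t, z) \<partial>M)\<bar> < 3 * \<eta>"
proof -
  have "\<forall>t'\<in>T. \<forall>\<^sub>F n in sequentially. dist ((\<Sum>j<n. H (t', xs j)) / n) (\<integral>z. H (t', z) \<partial>M) < \<eta>"
  proof
    fix t' assume "t' \<in> T"
    show "\<forall>\<^sub>F n in sequentially. dist ((\<Sum>j<n. H (t', xs j)) / n) (\<integral>z. H (t', z) \<partial>M) < \<eta>"
      by (rule tendstoD[OF lim[rule_format, OF \<open>t' \<in> T\<close>] \<eta>])
  qed
  then have "\<forall>\<^sub>F n in sequentially. \<forall>t'\<in>T. dist ((\<Sum>j<n. H (t', xs j)) / n) (\<integral>z. H (t', z) \<partial>M) < \<eta>"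
    by (rule eventually_ball_finite[OF T(1)])
  with eventually_gt_at_top[of 0]
  show ?thesis
  proof eventually_elim
    case (elim n)
    show ?case
    proof
      fix t assume t: "t \<in> \<Theta>"
      then obtain t' where t': "t' \<in> T" "\<forall>z\<in>K. \<bar>H (t, z) - H (t', z)\<bar> \<le> \<eta>"
        using T(3) by (meson less_imp_le)
      have "\<bar>(\<Sum>j<n. H (t, xs j)) / n - (\<Sum>j<n. H (t', xs j)) / n\<bar> \<le> \<eta>"
        using t'(2) xs elim(1) by (intro abs_average_diff_le) auto
      moreover have "\<bar>(\<integral>z. H (t, z) \<partial>M) - (\<integral>z. H (t', z) \<partial>M)\<bar> \<le> \<eta>"
        using t' T(2) t by (intro abs_integral_diff_le H) auto
      moreover have "\<bar>(\<Sum>j<n. H (t', xs j)) / n - (\<integral>z. H (t', z) \<partial>M)\<bar> < \<eta>"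
        using elim(2) t'(1) by (auto simp: dist_real_def)
      ultimately show "\<bar>(\<Sum>j<n. H (t, xs j)) / n - (\<integral>z. H (t, z) \<partial>M)\<bar> < 3 * \<eta>"
        by linarith
    qed
  qed
qed

lemma uniform_limit_F_fun:
  assumes C: "compact C" and a: "0 < a"
    and N: "\<forall>\<^sub>F n in sequentially. compactly_supported_prob_space (N n) K"
    and Z: "uniform_limit (C \<times> {a..b}) (\<lambda>n t. gauss_mass (N n) (fst t) (1 / (2 * (snd t)\<^sup>2)))
              (\<lambda>t. gauss_mass M (fst t) (1 / (2 * (snd t)\<^sup>2))) sequentially"
    and A: "uniform_limit (C \<times> {a..b}) (\<lambda>n t. gauss_moment (N n) (fst t) (1 / (2 * (snd t)\<^sup>2)))
              (\<lambda>t. gauss_moment M (fst t) (1 / (2 * (snd t)\<^sup>2))) sequentially"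
  shows "uniform_limit (C \<times> {a..b}) (\<lambda>n t. F_fun \<rho> (N n) (fst t) (snd t))
           (\<lambda>t. F_fun \<rho> M (fst t) (snd t)) sequentially"
proof -
  obtain R where R: "\<forall>x\<in>C. \<forall>z\<in>K. norm (x - z) \<le> R"
    using support_dist_bounded[OF compact_imp_bounded[OF C]] by blast
  define Q where "Q = {exp (- R\<^sup>2 / (2 * a\<^sup>2))..1} \<times> {0..R\<^sup>2} \<times> {a..b}"
  have in_Q: "kernel_stats L t \<in> Q" if "compactly_supported_prob_space L K" "t \<in> C \<times> {a..b}" for L t
    using compactly_supported_prob_space.kernel_stats_bounds[OF that(1), of t R a] R that(2) a
    by (force simp: Q_def)
  have "continuous_on Q (F_of_stats \<rho>)"
    unfolding F_of_stats_def Q_def using a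
    by (auto simp: case_prod_beta less_eq_real_def intro!: continuous_intros)
  then have uc: "uniformly_continuous_on Q (F_of_stats \<rho>)"
    by (intro compact_uniformly_continuous) (auto simp: Q_def intro!: compact_Times)
  have "uniform_limit (C \<times> {a..b}) (\<lambda>n. kernel_stats (N n)) (kernel_stats M) sequentially"
    unfolding kernel_stats_def
    by (rule uniform_limit_Pair[OF Z uniform_limit_Pair[OF A uniform_limit_const[where c = "\<lambda>t. snd t"]]])
  moreover have "\<forall>\<^sub>F n in sequentially. \<forall>t\<in>C \<times> {a..b}. kernel_stats (N n) t \<in> Q"
    using N by eventually_elim (use in_Q in blast)
  moreover have "closed Q"
    by (auto simp: Q_def intro!: closed_Times)
  ultimately have lim: "uniform_limit (C \<times> {a..b}) (\<lambda>n t. F_of_stats \<rho> (kernel_stats (N n) t))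
      (\<lambda>t. F_of_stats \<rho> (kernel_stats M t)) sequentially"
    using uniform_limit_compose_uniformly_continuous_on[OF _ uc] by blast
  have "\<forall>\<^sub>F n in sequentially. \<forall>t\<in>C \<times> {a..b}. F_fun \<rho> (N n) (fst t) (snd t) = F_of_stats \<rho> (kernel_stats (N n) t)"
    using N
  proof eventually_elim
    case (elim n)
    show ?case
      using compactly_supported_prob_space.F_fun_eq_F_of_stats[OF elim] a by fastforce
  qed
  moreover have "F_fun \<rho> M (fst t) (snd t) = F_of_stats \<rho> (kernel_stats M t)" if "t \<in> C \<times> {a..b}" for t
    using that a by (intro F_fun_eq_F_of_stats) auto
  ultimately show ?thesis
    using lim by (rule uniform_limit_cong[THEN iffD2])
qed

lemma gauss_mass_ge_ball:
  assumes "0 \<le> b"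
  shows "measure M (ball x r) * exp (- b * r\<^sup>2) \<le> gauss_mass M x b"
proof -
  have "indicator (ball x r) z * exp (- b * r\<^sup>2) \<le> exp (- b * (norm (x - z))\<^sup>2)" for z
  proof (cases "z \<in> ball x r")
    case True
    then have "(norm (x - z))\<^sup>2 \<le> r\<^sup>2"
      by (intro power_mono) (auto simp: dist_norm)
    with True show ?thesis
      using assms by (simp add: mult_left_mono)
  qed simp
  then have "(\<integral>z. indicator (ball x r) z * exp (- b * r\<^sup>2) \<partial>M) \<le> gauss_mass M x b"
    unfolding gauss_mass_def
    by (intro integral_mono integrable_indicator_mult[where f = "\<lambda>_. exp (- b * r\<^sup>2)"]) auto
  then show ?thesis
    by (simp add: space_eq_UNIV)
qed

lemma gauss_mass_outside_cball_le:
  assumes "0 \<le> b" "0 \<le> r"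
  shows "gauss_mass M x b - (\<integral>z. indicator (cball x r) z * exp (- b * (norm (x - z))\<^sup>2) \<partial>M) \<le> exp (- b * r\<^sup>2)"
proof -
  have int: "integrable M (\<lambda>z. indicator (cball x r) z * exp (- b * (norm (x - z))\<^sup>2))"
    by (intro integrable_indicator_mult continuous_intros) auto
  have "exp (- b * (norm (x - z))\<^sup>2) - indicator (cball x r) z * exp (- b * (norm (x - z))\<^sup>2) \<le> exp (- b * r\<^sup>2)"
    for z
  proof (cases "z \<in> cball x r")
    case False
    then have "r\<^sup>2 \<le> (norm (x - z))\<^sup>2"
      using assms(2) by (intro power_mono) (auto simp: dist_norm)
    with False show ?thesis
      using assms(1) by (simp add: mult_left_mono)
  qed simp
  then have "(\<integral>z. exp (- b * (norm (x - z))\<^sup>2) - indicator (cball x r) z * exp (- b * (norm (x - z))\<^sup>2) \<partial>M)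
      \<le> exp (- b * r\<^sup>2)"
    using int by (intro integral_le_const AE_I2) auto
  then show ?thesis
    using int by (simp add: gauss_mass_def)
qed

text \<open>The precision \<open>b\<close> below makes \<open>exp (- 3 / 4 * b * r\<^sup>2) = p / 2\<close>, where \<open>p\<close> is the mass of
  \<open>ball x (r / 2)\<close>, so that the kernel outside \<open>cball x r\<close> carries at most half of the total mass.\<close>

lemma gauss_mass_cball_ge_half:
  assumes r: "0 < r" and p: "0 < measure M (ball x (r / 2))"
  defines "b \<equiv> 4 * ln (2 / measure M (ball x (r / 2))) / (3 * r\<^sup>2)"
  shows "0 < b" "gauss_mass M x b / 2 \<le> (\<integral>z. indicator (cball x r) z * exp (- b * (norm (x - z))\<^sup>2) \<partial>M)"
proof -
  define p where "p = measure M (ball x (r / 2))"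
  have p01: "0 < p" "p \<le> 1"
    using p by (auto simp: p_def)
  show b: "0 < b"
    using p01 r by (simp add: b_def p_def[symmetric])
  have "exp (- (3 / 4) * b * r\<^sup>2) = p / 2"
  proof -
    have "- (3 / 4) * b * r\<^sup>2 = - ln (2 / p)"
      using r by (simp add: b_def p_def field_simps)
    then show ?thesis
      using p01 by (simp add: exp_minus)
  qed
  moreover have "exp (- b * r\<^sup>2) = exp (- (3 / 4) * b * r\<^sup>2) * exp (- b * (r / 2)\<^sup>2)"
    by (simp add: power_divide field_simps flip: exp_add)
  moreover have "p * exp (- b * (r / 2)\<^sup>2) \<le> gauss_mass M x b"
    unfolding p_def using b by (intro gauss_mass_ge_ball) simp
  ultimately have "exp (- b * r\<^sup>2) \<le> gauss_mass M x b / 2"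
    by (smt (verit) field_sum_of_halves mult.commute mult.left_commute times_divide_eq_left)
  then show "gauss_mass M x b / 2 \<le> (\<integral>z. indicator (cball x r) z * exp (- b * (norm (x - z))\<^sup>2) \<partial>M)"
    using gauss_mass_outside_cball_le[of b r x] b r by simp
qed

lemma integral_mult_ln_ge_local:
  fixes w :: "'a \<Rightarrow> real"
  assumes "continuous_on UNIV w" "\<And>z. 0 < w z" "(\<integral>z. w z \<partial>M) = 1"
    and "A \<in> sets borel" "0 < c"
  shows "ln c * (\<integral>z. indicator A z * w z \<partial>M) - c * measure M A + measure M A \<le> (\<integral>z. w z * ln (w z) \<partial>M)"
proof -
  have iw: "integrable M w"
    using assms(1) by (rule integrable_continuous)
  have iA: "integrable M (\<lambda>z. indicator A z * w z)" "integrable M (\<lambda>z. indicator A z * (c - 1))"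
    by (intro integrable_indicator_mult[OF assms(4)] assms(1) continuous_intros)+
  have "ln c * (indicator A z * w z) - indicator A z * (c - 1) + (w z - 1) \<le> w z * ln (w z)" for z
    using mult_ln_ge_tangent[OF assms(2)[of z] assms(5)] mult_ln_ge_tangent[OF assms(2)[of z], of 1]
    by (cases "z \<in> A") auto
  moreover have "integrable M (\<lambda>z. w z * ln (w z))"
    using assms(1,2) by (intro integrable_continuous continuous_intros) (auto simp: less_imp_neq[symmetric])
  ultimately have "(\<integral>z. ln c * (indicator A z * w z) - indicator A z * (c - 1) + (w z - 1) \<partial>M)
      \<le> (\<integral>z. w z * ln (w z) \<partial>M)"
    using iw iA by (intro integral_mono) auto
  moreover have "(\<integral>z. ln c * (indicator A z * w z) - indicator A z * (c - 1) + (w z - 1) \<partial>M)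
      = ((\<integral>z. ln c * (indicator A z * w z) \<partial>M) - (\<integral>z. indicator A z * (c - 1) \<partial>M))
        + ((\<integral>z. w z \<partial>M) - (\<integral>z. 1 \<partial>M))"
    using iw iA
    by (subst Bochner_Integration.integral_add Bochner_Integration.integral_diff; auto)+
  moreover have "(\<integral>z. indicator A z * (c - 1) \<partial>M) = (c - 1) * measure M A"
    using assms(4) sets_borel_subset by (auto simp: space_eq_UNIV)
  ultimately show ?thesis
    using assms(3) by (simp add: algebra_simps prob_space)
qed

subsection \<open>The positive zero of \<open>F_fun\<close>\<close>

context
  fixes \<rho> :: real
  assumes rho: "0 < \<rho>" "\<rho> < 1"
begin

lemma F_fun_pos_below_root:
  assumes "0 < s" "s < s0" "F_fun \<rho> M x s0 = 0"
  shows "0 < F_fun \<rho> M x s"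
  using F_fun_strict_antimono[OF assms(1,2), of \<rho> x] assms(3) rho by simp

lemma F_fun_neg_above_root:
  assumes "0 < s0" "s0 < s" "F_fun \<rho> M x s0 = 0"
  shows "F_fun \<rho> M x s < 0"
  using F_fun_strict_antimono[OF assms(1,2), of \<rho> x] assms(3) rho
  by (cases "F_fun \<rho> M x s = ln \<rho>") auto

lemma sigma_star_eqI:
  assumes "0 < s0" "F_fun \<rho> M x s0 = 0"
  shows "sigma_star \<rho> M x = s0"
  unfolding sigma_star_def
proof (rule the_equality)
  fix s assume "0 < s \<and> F_fun \<rho> M x s = 0"
  then show "s = s0"
    using F_fun_pos_below_root[of s s0 x] F_fun_neg_above_root[OF assms(1) _ assms(2), of s]
    by (cases s s0 rule: linorder_cases) (auto simp: assms(2))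
qed (use assms in simp)

lemma sigma_star_between:
  assumes "0 < s1" "s1 < s2" "0 < F_fun \<rho> M x s1" "F_fun \<rho> M x s2 < 0"
  shows "s1 < sigma_star \<rho> M x" "sigma_star \<rho> M x < s2" "F_fun \<rho> M x (sigma_star \<rho> M x) = 0"
proof -
  obtain s0 where s0: "s1 \<le> s0" "s0 \<le> s2" "F_fun \<rho> M x s0 = 0"
    using IVT2'[of "F_fun \<rho> M x" s2 0 s1] continuous_on_F_fun_sigma[OF assms(1), of s2 \<rho> x] assms by auto
  with assms have "s1 < s0" "s0 < s2"
    by (auto simp: order_le_less)
  with s0(3) sigma_star_eqI[of s0 x] assms(1)
  show "s1 < sigma_star \<rho> M x" "sigma_star \<rho> M x < s2" "F_fun \<rho> M x (sigma_star \<rho> M x) = 0"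
    by auto
qed

lemma sigma_star_root:
  assumes "\<exists>\<sigma>>0. F_fun \<rho> M x \<sigma> = 0"
  shows "0 < sigma_star \<rho> M x" "F_fun \<rho> M x (sigma_star \<rho> M x) = 0"
  using assms sigma_star_eqI by auto

lemma F_fun_neg_for_large_sigma: "\<exists>\<sigma>>0. F_fun \<rho> M x \<sigma> < 0"
proof -
  obtain R where R: "\<forall>z\<in>K. norm (x - z) \<le> R"
    using support_dist_bounded[of "{x}"] by blast
  define b where "b = - ln \<rho> / (2 * (R\<^sup>2 + 1))"
  have ln_rho: "ln \<rho> < 0"
    using rho by simp
  have b: "0 < b"
    unfolding b_def using ln_rho by (intro divide_pos_pos) (auto simp: add_nonneg_pos)
  have "b * R\<^sup>2 = - ln \<rho> * (R\<^sup>2 / (2 * (R\<^sup>2 + 1)))"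
    by (simp add: b_def)
  also have "\<dots> < - ln \<rho>"
  proof -
    have "R\<^sup>2 / (2 * (R\<^sup>2 + 1)) < 1"
      by (simp add: add_nonneg_pos)
    from mult_strict_left_mono_neg[OF this ln_rho] show ?thesis
      by simp
  qed
  finally have bR: "b * R\<^sup>2 < - ln \<rho>" .
  have "- b * R\<^sup>2 \<le> ln (gauss_mass M x b)"
    using gauss_mass_ge[OF less_imp_le[OF b] R] gauss_mass_pos[of x b]
    by (metis ln_exp ln_le_cancel_iff exp_gt_zero)
  moreover have "0 \<le> b * gauss_mean M x b"
    using b gauss_mean_nonneg[of x b] by simp
  ultimately have "gauss_neg_entropy M x b + ln \<rho> < 0"
    using bR by (simp add: gauss_neg_entropy_def)
  then show ?thesis
    using b by (intro exI[of _ "sqrt (1 / (2 * b))"]) (simp add: F_fun_at_precision)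
qed

lemma F_fun_pos_for_small_sigma:
  assumes r: "0 < r" and p: "0 < measure M (ball x (r / 2))"
    and m: "measure M (cball x r) \<le> \<rho>\<^sup>2 / (2 * exp 2)"
  shows "\<exists>\<sigma>>0. 0 < F_fun \<rho> M x \<sigma>"
proof -
  define b where "b = 4 * ln (2 / measure M (ball x (r / 2))) / (3 * r\<^sup>2)"
  define Z where "Z = gauss_mass M x b"
  define w where "w z = exp (- b * (norm (x - z))\<^sup>2) / Z" for z
  define W where "W = (\<integral>z. indicator (cball x r) z * w z \<partial>M)"
  have Z: "0 < Z"
    by (simp add: Z_def gauss_mass_pos)
  have b: "0 < b"
    using gauss_mass_cball_ge_half(1)[OF r p] by (simp add: b_def)
  have "Z / 2 \<le> (\<integral>z. indicator (cball x r) z * exp (- b * (norm (x - z))\<^sup>2) \<partial>M)"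
    using gauss_mass_cball_ge_half(2)[OF r p] by (simp add: b_def Z_def)
  also have "\<dots> = W * Z"
    using Z by (simp add: W_def w_def)
  finally have W: "1 / 2 \<le> W"
    using Z by simp
  \<comment> \<open>for this \<open>c\<close> the bound of \<open>integral_mult_ln_ge_local\<close> is at least \<open>1 / 2 - ln \<rho>\<close>\<close>
  define c where "c = exp 2 / \<rho>\<^sup>2"
  have c: "0 < c" "ln c = 2 - 2 * ln \<rho>"
    using rho by (auto simp: c_def ln_div ln_realpow)
  have "ln c * W - c * measure M (cball x r) + measure M (cball x r) \<le> (\<integral>z. w z * ln (w z) \<partial>M)"
    unfolding W_def using Z c
    by (intro integral_mult_ln_ge_local) (auto simp: w_def Z_def gauss_mass_def intro!: continuous_intros)
  also have "\<dots> = gauss_neg_entropy M x b"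
    by (simp add: gauss_neg_entropy_eq_integral w_def Z_def)
  finally have "ln c * W - c * measure M (cball x r) \<le> gauss_neg_entropy M x b"
    using measure_nonneg[of M "cball x r"] by linarith
  moreover have "ln c * (1 / 2) \<le> ln c * W"
    using W c(2) ln_less_zero[OF rho] by (intro mult_left_mono) auto
  moreover have "c * measure M (cball x r) \<le> 1 / 2"
    using mult_left_mono[OF m less_imp_le[OF c(1)]] rho by (simp add: c_def)
  ultimately have "0 < gauss_neg_entropy M x b + ln \<rho>"
    using c(2) by linarith
  then show ?thesis
    using b by (intro exI[of _ "sqrt (1 / (2 * b))"]) (simp add: F_fun_at_precision)
qed

lemma F_fun_has_root:
  assumes "\<forall>r>0. 0 < measure M (ball x r)" "\<forall>\<epsilon>>0. \<exists>r>0. measure M (cball x r) \<le> \<epsilon>"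
  shows "\<exists>\<sigma>>0. F_fun \<rho> M x \<sigma> = 0"
proof -
  obtain s2 where s2: "0 < s2" "F_fun \<rho> M x s2 < 0"
    using F_fun_neg_for_large_sigma by blast
  obtain r where r: "0 < r" "measure M (cball x r) \<le> \<rho>\<^sup>2 / (2 * exp 2)"
    using assms(2) rho by (metis divide_pos_pos exp_gt_zero mult_pos_pos zero_less_numeral zero_less_power)
  obtain s1 where s1: "0 < s1" "0 < F_fun \<rho> M x s1"
    using F_fun_pos_for_small_sigma[OF r(1) _ r(2)] assms(1) r(1) by auto
  have "s1 < s2"
    using F_fun_antimono[OF s2(1), of s1 \<rho> x] s1 s2 by (cases "s1 < s2") auto
  then have "s1 < sigma_star \<rho> M x" "F_fun \<rho> M x (sigma_star \<rho> M x) = 0"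
    using sigma_star_between[OF s1(1) _ s1(2) s2(2)] by auto
  with s1(1) show ?thesis
    by (intro exI[of _ "sigma_star \<rho> M x"]) auto
qed

lemma continuous_on_sigma_star:
  assumes "compact S" "\<forall>x\<in>S. \<exists>\<sigma>>0. F_fun \<rho> M x \<sigma> = 0"
  shows "continuous_on S (sigma_star \<rho> M)"
  unfolding continuous_on_def
proof
  fix x0 assume x0: "x0 \<in> S"
  obtain s0 where s0: "0 < s0" "F_fun \<rho> M x0 s0 = 0"
    using assms(2) x0 by blast
  show "(sigma_star \<rho> M \<longlongrightarrow> sigma_star \<rho> M x0) (at x0 within S)"
  proof (rule tendstoI)
    fix e :: real assume "0 < e"
    define \<eta> where "\<eta> = min e s0 / 2"
    have \<eta>: "0 < \<eta>" "\<eta> < e" "\<eta> < s0"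
      using \<open>0 < e\<close> s0(1) by (auto simp: \<eta>_def)
    have lim: "((\<lambda>y. F_fun \<rho> M y s) \<longlongrightarrow> F_fun \<rho> M x0 s) (at x0 within S)" if "0 < s" for s
      using continuous_on_F_fun_at[OF that assms(1), of \<rho>] x0 by (simp add: continuous_on_def)
    have "\<forall>\<^sub>F y in at x0 within S. 0 < F_fun \<rho> M y (s0 - \<eta>)"
      using \<eta> s0 by (intro order_tendstoD(1)[OF lim] F_fun_pos_below_root) auto
    moreover have "\<forall>\<^sub>F y in at x0 within S. F_fun \<rho> M y (s0 + \<eta>) < 0"
      using \<eta> s0 by (intro order_tendstoD(2)[OF lim] F_fun_neg_above_root) auto
    ultimately show "\<forall>\<^sub>F y in at x0 within S. dist (sigma_star \<rho> M y) (sigma_star \<rho> M x0) < e"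
    proof eventually_elim
      case (elim y)
      then have "\<bar>sigma_star \<rho> M y - s0\<bar> < \<eta>"
        using sigma_star_between(1,2)[of "s0 - \<eta>" "s0 + \<eta>" y] \<eta> by auto
      then show ?case
        using sigma_star_eqI[OF s0] \<eta> by (simp add: dist_real_def)
    qed
  qed
qed

lemma sigma_star_bounds:
  assumes S: "compact S" "\<forall>x\<in>S. \<exists>\<sigma>>0. F_fun \<rho> M x \<sigma> = 0"
  obtains lo hi where "0 < lo" "\<forall>y\<in>S. lo \<le> sigma_star \<rho> M y \<and> sigma_star \<rho> M y \<le> hi"
proof (cases "S = {}")
  case False
  obtain y1 where y1: "y1 \<in> S" "\<forall>y\<in>S. sigma_star \<rho> M y1 \<le> sigma_star \<rho> M y"
    using continuous_attains_inf[OF S(1) False continuous_on_sigma_star[OF S]] by blast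
  obtain y2 where "\<forall>y\<in>S. sigma_star \<rho> M y \<le> sigma_star \<rho> M y2"
    using continuous_attains_sup[OF S(1) False continuous_on_sigma_star[OF S]] by blast
  with y1 show ?thesis
    using sigma_star_root(1) S(2) by (intro that[of "sigma_star \<rho> M y1" "sigma_star \<rho> M y2"]) auto
qed (auto intro: that[of 1])

lemma sigma_star_uniform_bracket:
  assumes S: "compact S" "\<forall>x\<in>S. \<exists>\<sigma>>0. F_fun \<rho> M x \<sigma> = 0"
    and bounds: "\<forall>y\<in>S. lo \<le> sigma_star \<rho> M y \<and> sigma_star \<rho> M y \<le> hi" and \<eta>: "0 < \<eta>" "\<eta> < lo"
  shows "\<exists>\<delta>>0. \<forall>y\<in>S. \<delta> \<le> F_fun \<rho> M y (sigma_star \<rho> M y - \<eta>) \<and> F_fun \<rho> M y (sigma_star \<rho> M y + \<eta>) \<le> - \<delta>"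
proof (cases "S = {}")
  case False
  have cF: "continuous_on (S \<times> {lo - \<eta>..hi + \<eta>}) (\<lambda>t. F_fun \<rho> M (fst t) (snd t))"
    using \<eta> by (intro continuous_on_F_fun S(1)) simp
  have cs: "continuous_on S (sigma_star \<rho> M)"
    using continuous_on_sigma_star[OF S] .
  have "continuous_on S (\<lambda>y. F_fun \<rho> M y (sigma_star \<rho> M y - \<eta>))"
    using continuous_on_compose2[OF cF, of S "\<lambda>y. (y, sigma_star \<rho> M y - \<eta>)"] bounds \<eta>(1)
    by (force intro!: continuous_intros cs)
  then obtain ya where ya: "ya \<in> S"
    "\<forall>y\<in>S. F_fun \<rho> M ya (sigma_star \<rho> M ya - \<eta>) \<le> F_fun \<rho> M y (sigma_star \<rho> M y - \<eta>)"
    using continuous_attains_inf[OF S(1) False] by blast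
  have "continuous_on S (\<lambda>y. F_fun \<rho> M y (sigma_star \<rho> M y + \<eta>))"
    using continuous_on_compose2[OF cF, of S "\<lambda>y. (y, sigma_star \<rho> M y + \<eta>)"] bounds \<eta>(1)
    by (force intro!: continuous_intros cs)
  then obtain yb where yb: "yb \<in> S"
    "\<forall>y\<in>S. F_fun \<rho> M y (sigma_star \<rho> M y + \<eta>) \<le> F_fun \<rho> M yb (sigma_star \<rho> M yb + \<eta>)"
    using continuous_attains_sup[OF S(1) False] by blast
  have "0 < F_fun \<rho> M ya (sigma_star \<rho> M ya - \<eta>)"
    using F_fun_pos_below_root[of "sigma_star \<rho> M ya - \<eta>" "sigma_star \<rho> M ya" ya]
      sigma_star_root[of ya] S(2) ya(1) bounds \<eta> by force
  moreover have "F_fun \<rho> M yb (sigma_star \<rho> M yb + \<eta>) < 0"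
    using sigma_star_root[of yb] S(2) yb(1) \<eta> by (intro F_fun_neg_above_root) auto
  ultimately show ?thesis
    using ya(2) yb(2)
    by (intro exI[of _ "min (F_fun \<rho> M ya (sigma_star \<rho> M ya - \<eta>)) (- F_fun \<rho> M yb (sigma_star \<rho> M yb + \<eta>))"])
       force
qed (auto intro: exI[of _ 1])

lemma uniform_limit_sigma_star:
  assumes S: "compact S" "\<forall>x\<in>S. \<exists>\<sigma>>0. F_fun \<rho> M x \<sigma> = 0"
    and N: "\<forall>\<^sub>F n in sequentially. compactly_supported_prob_space (N n) K"
    and F: "\<And>a b. 0 < a \<Longrightarrow> uniform_limit (S \<times> {a..b})
              (\<lambda>n t. F_fun \<rho> (N n) (fst t) (snd t)) (\<lambda>t. F_fun \<rho> M (fst t) (snd t)) sequentially"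
  shows "uniform_limit S (\<lambda>n. sigma_star \<rho> (N n)) (sigma_star \<rho> M) sequentially"
proof (rule uniform_limitI)
  fix e :: real assume "0 < e"
  obtain lo hi where lo_hi: "0 < lo" "\<forall>y\<in>S. lo \<le> sigma_star \<rho> M y \<and> sigma_star \<rho> M y \<le> hi"
    using sigma_star_bounds[OF S] by blast
  define \<eta> where "\<eta> = min e lo / 2"
  have \<eta>: "0 < \<eta>" "\<eta> < e" "\<eta> < lo"
    using \<open>0 < e\<close> lo_hi(1) by (auto simp: \<eta>_def)
  obtain \<delta> where \<delta>: "0 < \<delta>"
    "\<forall>y\<in>S. \<delta> \<le> F_fun \<rho> M y (sigma_star \<rho> M y - \<eta>) \<and> F_fun \<rho> M y (sigma_star \<rho> M y + \<eta>) \<le> - \<delta>"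
    using sigma_star_uniform_bracket[OF S lo_hi(2) \<eta>(1,3)] by blast
  have "0 < lo - \<eta>"
    using \<eta>(3) by simp
  from uniform_limitD[OF F[OF this, of "hi + \<eta>"] \<delta>(1)] N
  show "\<forall>\<^sub>F n in sequentially. \<forall>y\<in>S. dist (sigma_star \<rho> (N n) y) (sigma_star \<rho> M y) < e"
  proof eventually_elim
    case (elim n)
    show ?case
    proof
      fix y assume y: "y \<in> S"
      have "(y, sigma_star \<rho> M y - \<eta>) \<in> S \<times> {lo - \<eta>..hi + \<eta>}" "(y, sigma_star \<rho> M y + \<eta>) \<in> S \<times> {lo - \<eta>..hi + \<eta>}"
        using y lo_hi(2) \<eta>(1) by auto
      then have "\<bar>F_fun \<rho> (N n) y (sigma_star \<rho> M y - \<eta>) - F_fun \<rho> M y (sigma_star \<rho> M y - \<eta>)\<bar> < \<delta>"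
        "\<bar>F_fun \<rho> (N n) y (sigma_star \<rho> M y + \<eta>) - F_fun \<rho> M y (sigma_star \<rho> M y + \<eta>)\<bar> < \<delta>"
        using elim(1) by (fastforce simp: dist_real_def)+
      then have "0 < F_fun \<rho> (N n) y (sigma_star \<rho> M y - \<eta>)" "F_fun \<rho> (N n) y (sigma_star \<rho> M y + \<eta>) < 0"
        using \<delta>(2) y by (auto simp: abs_less_iff)
      moreover have "0 < sigma_star \<rho> M y - \<eta>"
        using \<eta>(3) lo_hi(2) y by force
      ultimately have "\<bar>sigma_star \<rho> (N n) y - sigma_star \<rho> M y\<bar> < \<eta>"
        using compactly_supported_prob_space.sigma_star_between(1,2)[OF elim(2) rho,
            of "sigma_star \<rho> M y - \<eta>" "sigma_star \<rho> M y + \<eta>" y] \<eta>(1)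
        by (simp add: abs_less_iff)
      then show "dist (sigma_star \<rho> (N n) y) (sigma_star \<rho> M y) < e"
        using \<eta>(2) by (simp add: dist_real_def)
    qed
  qed
qed

end

end

section \<open>Empirical measures and measures with a density\<close>

lemma emp_measure_eq_map_pmf:
  assumes "0 < n"
  shows "emp_measure xs n = measure_pmf (map_pmf xs (pmf_of_set {0..<n}))"
  using assms unfolding emp_measure_def by (simp add: map_pmf_of_set mset_map mset_upt)

lemma integral_emp_measure:
  assumes "0 < n"
  shows "(\<integral>z. h z \<partial>emp_measure xs n) = (\<Sum>j<n. h (xs j)) / n"
  using assms
  by (simp add: emp_measure_eq_map_pmf integral_map_pmf integral_pmf_of_set atLeast0LessThan lessThan_empty_iff)

lemma compactly_supported_emp_measure:
  assumes "0 < n" "compact K" "\<forall>j<n. xs j \<in> K"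
  shows "compactly_supported_prob_space (emp_measure xs n) K"
proof (intro compactly_supported_prob_space.intro compactly_supported_prob_space_axioms.intro)
  show "prob_space (emp_measure xs n)"
    unfolding emp_measure_def by (rule prob_space_measure_pmf)
  show "sets borel \<subseteq> sets (emp_measure xs n)"
    by (simp add: emp_measure_def)
  show "AE z in emp_measure xs n. z \<in> K"
    unfolding emp_measure_eq_map_pmf[OF assms(1)] AE_measure_pmf_iff using assms(1,3) by auto
qed (rule assms(2))

lemma eventually_compactly_supported_emp_measure:
  assumes "compact K" "\<forall>j. xs j \<in> K"
  shows "\<forall>\<^sub>F n in sequentially. compactly_supported_prob_space (emp_measure xs n) K"
  using eventually_gt_at_top[of 0]
  by eventually_elim (use assms in \<open>auto intro: compactly_supported_emp_measure\<close>)

lemma uniform_limit_emp_measure_integral: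
  assumes "uniform_limit S (\<lambda>n t. (\<Sum>j<n. H t (xs j)) / n) L sequentially"
  shows "uniform_limit S (\<lambda>n t. \<integral>z. H t z \<partial>emp_measure xs n) L sequentially"
proof -
  have "\<forall>\<^sub>F n in sequentially. \<forall>t\<in>S. (\<integral>z. H t z \<partial>emp_measure xs n) = (\<Sum>j<n. H t (xs j)) / n"
    using eventually_gt_at_top[of 0] by eventually_elim (simp add: integral_emp_measure)
  with assms show ?thesis
    by (simp add: uniform_limit_cong)
qed

lemma C1_real_imp_continuous: "C1_real f \<Longrightarrow> continuous_on UNIV f"
  unfolding C1_real_def
  by (metis continuous_at_imp_continuous_on has_derivative_continuous)

lemma emeasure_density_ball_pos:
  fixes f :: "'a::euclidean_space \<Rightarrow> real"
  assumes "continuous_on UNIV f" "0 < f y" "0 < d"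
  shows "0 < emeasure (density lborel f) (ball y d)"
proof -
  have [measurable]: "f \<in> borel_measurable borel"
    using assms(1) by (rule borel_measurable_continuous_onI)
  obtain e where e: "0 < e" "\<And>z. dist z y < e \<Longrightarrow> dist (f z) (f y) < f y / 2"
    using assms(1,2) unfolding continuous_on_iff by (metis UNIV_I half_gt_zero)
  define e' where "e' = min e d"
  have e': "0 < e'"
    using e(1) assms(3) by (simp add: e'_def)
  have "f y / 2 \<le> f z" if "z \<in> ball y e'" for z
  proof -
    have "\<bar>f z - f y\<bar> < f y / 2"
      using e(2)[of z] that by (simp add: e'_def dist_commute dist_real_def abs_minus_commute)
    then show ?thesis
      unfolding abs_less_iff by linarith
  qed
  then have "ennreal (f y / 2) * emeasure lborel (ball y e') \<le> (\<integral>\<^sup>+z\<in>ball y e'. ennreal (f z) \<partial>lborel)"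
    by (subst nn_integral_cmult_indicator[symmetric])
       (auto split: split_indicator intro!: nn_integral_mono ennreal_leI)
  also have "\<dots> \<le> emeasure (density lborel f) (ball y d)"
    by (subst emeasure_density) (auto intro!: nn_integral_mono split: split_indicator simp: e'_def)
  finally have le: "ennreal (f y / 2) * emeasure lborel (ball y e') \<le> emeasure (density lborel f) (ball y d)" .
  have "0 < unit_ball_vol (real DIM('a)) * e' ^ DIM('a)"
    using e' by (intro mult_pos_pos unit_ball_vol_pos) auto
  then have "0 < ennreal (f y / 2) * emeasure lborel (ball y e')"
    using e' assms(2) by (simp add: emeasure_ball ennreal_mult''[symmetric] del: ennreal_mult'')
  with le show ?thesis
    by order
qed

lemma emeasure_density_singleton:
  fixes f :: "'a::euclidean_space \<Rightarrow> real"
  assumes "f \<in> borel_measurable borel"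
  shows "emeasure (density lborel f) {x} = 0"
  using assms by (subst emeasure_density) (auto intro!: nn_integral_null_set simp: null_sets_def emeasure_lborel_singleton)

lemma measure_cball_small:
  assumes "finite_measure M" "sets M = sets borel" "emeasure M {x} = 0" "0 < \<epsilon>"
  shows "\<exists>r>0. measure M (cball x r) \<le> \<epsilon>"
proof -
  interpret finite_measure M by fact
  define A where "A n = cball x (1 / Suc n)" for n
  have "decseq A"
    unfolding A_def by (intro decseq_SucI subset_cball frac_le) auto
  moreover have "range A \<subseteq> sets M"
    by (simp add: A_def assms(2) image_subset_iff)
  ultimately have lim: "(\<lambda>n. measure M (A n)) \<longlonglongrightarrow> measure M (\<Inter>(range A))"
    by (rule finite_Lim_measure_decseq[rotated])
  have "\<Inter>(range A) = {x}"
  proof (intro equalityI subsetI)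
    fix z assume z: "z \<in> \<Inter>(range A)"
    show "z \<in> {x}"
    proof (rule ccontr)
      assume "z \<notin> {x}"
      then have "0 < dist x z"
        by simp
      then obtain n where "1 / Suc n < dist x z"
        using nat_approx_posE by blast
      moreover have "dist x z \<le> 1 / Suc n"
        using z by (auto simp: A_def)
      ultimately show False
        by simp
    qed
  qed (auto simp: A_def)
  with lim assms(3) have "(\<lambda>n. measure M (A n)) \<longlonglongrightarrow> 0"
    by (simp add: measure_def)
  then have "\<forall>\<^sub>F n in sequentially. measure M (A n) < \<epsilon>"
    using assms(4) by (intro order_tendstoD) auto
  then obtain n where "measure M (A n) < \<epsilon>"
    by (auto simp: eventually_sequentially)
  then show ?thesis
    by (intro exI[of _ "1 / Suc n"]) (auto simp: A_def)
qed

lemma closure_density_pos_subset: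
  fixes f :: "'a::euclidean_space \<Rightarrow> real"
  assumes "continuous_on UNIV f" "closed K" "emeasure (density lborel f) (UNIV - K) = 0"
  shows "closure {y. 0 < f y} \<subseteq> K"
proof (intro closure_minimal subsetI assms(2), rule ccontr)
  fix y assume "y \<in> {y. 0 < f y}" "y \<notin> K"
  moreover have "open (UNIV - K)"
    using assms(2) by (simp add: open_Diff)
  ultimately obtain d where d: "0 < d" "ball y d \<subseteq> UNIV - K" "0 < f y"
    using open_contains_ball by blast
  have "emeasure (density lborel f) (ball y d) \<le> emeasure (density lborel f) (UNIV - K)"
    using d(2) assms(2) by (intro emeasure_mono) auto
  then show False
    using emeasure_density_ball_pos[OF assms(1) d(3,1)] assms(3) by simp
qed

lemma compact_closure_density_pos:
  fixes f :: "'a::euclidean_space \<Rightarrow> real"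
  assumes "continuous_on UNIV f" "compact K" "emeasure (density lborel f) (UNIV - K) = 0"
  shows "compact (closure {y. 0 < f y})"
  using closure_density_pos_subset[OF assms(1) compact_imp_closed[OF assms(2)] assms(3)] assms(2)
  by (meson bounded_subset closed_closure compact_eq_bounded_closed)

lemma measure_density_ball_pos:
  fixes f :: "'a::euclidean_space \<Rightarrow> real"
  assumes "finite_measure (density lborel f)" "continuous_on UNIV f" "x \<in> closure {y. 0 < f y}" "0 < r"
  shows "0 < measure (density lborel f) (ball x r)"
proof -
  obtain y where y: "0 < f y" "dist y x < r / 2"
    using assms(3,4) unfolding closure_approachable by (metis half_gt_zero mem_Collect_eq)
  have "ball y (r / 2) \<subseteq> ball x r"
  proof
    fix z assume "z \<in> ball y (r / 2)"
    then have "dist y z < r / 2"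
      by simp
    moreover have "dist x z \<le> dist x y + dist y z"
      by (rule dist_triangle)
    ultimately show "z \<in> ball x r"
      using y(2) by (simp add: dist_commute)
  qed
  then have "emeasure (density lborel f) (ball y (r / 2)) \<le> emeasure (density lborel f) (ball x r)"
    by (intro emeasure_mono) auto
  with emeasure_density_ball_pos[OF assms(2) y(1), of "r / 2"] assms(4)
  have "0 < emeasure (density lborel f) (ball x r)"
    by simp
  then show ?thesis
    using finite_measure.emeasure_eq_measure[OF assms(1)] by simp
qed

lemma compactly_supported_density:
  fixes f :: "'a::euclidean_space \<Rightarrow> real"
  assumes "prob_space (density lborel f)" "compact K" "emeasure (density lborel f) (UNIV - K) = 0"
  shows "compactly_supported_prob_space (density lborel f) K"
proof (intro compactly_supported_prob_space.intro compactly_supported_prob_space_axioms.intro assms(1,2))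
  have "UNIV - K \<in> null_sets (density lborel f)"
    using assms(2,3) by (auto simp: null_sets_def compact_imp_closed)
  then show "AE z in density lborel f. z \<in> K"
    by (rule AE_I') auto
qed simp

lemma F_fun_density_has_root:
  fixes f :: "'a::euclidean_space \<Rightarrow> real"
  assumes "prob_space (density lborel f)" "continuous_on UNIV f"
    and "compact K" "emeasure (density lborel f) (UNIV - K) = 0"
    and "0 < \<rho>" "\<rho> < 1" "x \<in> closure {y. 0 < f y}"
  shows "\<exists>\<sigma>>0. F_fun \<rho> (density lborel f) x \<sigma> = 0"
proof (rule compactly_supported_prob_space.F_fun_has_root[OF compactly_supported_density[OF assms(1,3,4)] assms(5,6)])
  show "\<forall>r>0. 0 < measure (density lborel f) (ball x r)"
    using measure_density_ball_pos[OF prob_space.axioms(1)[OF assms(1)] assms(2,7)] by blast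
  show "\<forall>\<epsilon>>0. \<exists>r>0. measure (density lborel f) (cball x r) \<le> \<epsilon>"
    using measure_cball_small[OF prob_space.axioms(1)[OF assms(1)] _ emeasure_density_singleton]
      borel_measurable_continuous_onI[OF assms(2)] by simp
qed

lemma AE_in_closure_density_pos:
  fixes f :: "'a::euclidean_space \<Rightarrow> real" and X :: "nat \<Rightarrow> 'b \<Rightarrow> 'a"
  assumes "\<forall>i. X i \<in> borel_measurable P" "\<forall>i. distr P borel (X i) = density lborel f"
    and "f \<in> borel_measurable borel"
  shows "AE \<omega> in P. \<forall>j. X j \<omega> \<in> closure {y. 0 < f y}"
proof -
  have "AE y in distr P borel (X j). 0 < f y" for j
    unfolding assms(2)[rule_format] using assms(3) by (subst AE_density) auto
  then have pos: "AE \<omega> in P. 0 < f (X j \<omega>)" for j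
    using AE_distrD[of "X j" P borel "\<lambda>y. 0 < f y"] assms(1) by blast
  have "AE \<omega> in P. \<forall>j. 0 < f (X j \<omega>)"
    unfolding AE_all_countable by (intro allI pos)
  then show ?thesis
    by eventually_elim (auto intro: closure_subset[THEN subsetD])
qed

section \<open>A uniform strong law of large numbers\<close>

lemma Hoeffding_average_tail:
  fixes P :: "'b measure" and X :: "nat \<Rightarrow> 'b \<Rightarrow> 'a::topological_space" and h :: "'a \<Rightarrow> real"
  assumes P: "prob_space P" and X: "\<forall>i. X i \<in> borel_measurable P"
    and indep: "prob_space.indep_vars P (\<lambda>_. borel) X UNIV" and distr: "\<forall>i. distr P borel (X i) = \<mu>"
    and h: "h \<in> borel_measurable borel" "AE z in \<mu>. \<bar>h z\<bar> \<le> C" and \<epsilon>: "0 \<le> \<epsilon>"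
  shows "measure P {\<omega> \<in> space P. \<epsilon> \<le> \<bar>(\<Sum>j<Suc n. h (X j \<omega>)) / real (Suc n) - (\<integral>z. h z \<partial>\<mu>)\<bar>}
           \<le> 2 * exp (-2 * \<epsilon>\<^sup>2 / (2 * \<bar>C\<bar> + 1)\<^sup>2) ^ Suc n"
proof -
  interpret prob_space P by (rule P)
  note h(1)[measurable]
  have X_meas[measurable]: "X i \<in> borel_measurable P" for i
    using X by auto
  define Y where "Y j \<omega> = h (X j \<omega>)" for j \<omega>
  have Y_meas: "Y i \<in> borel_measurable P" for i
    unfolding Y_def by measurable
  have "distr P borel (Y i) = distr (distr P borel (X i)) borel h" for i
    unfolding Y_def by (subst distr_distr) (auto simp: comp_def)
  then have same_distr: "distr P borel (Y i) = distr P borel (Y 0)" for i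
    using distr by simp
  have "AE z in distr P borel (X 0). \<bar>h z\<bar> \<le> C"
    unfolding distr[rule_format] by (rule h(2))
  then have "AE \<omega> in P. \<bar>h (X 0 \<omega>)\<bar> \<le> C"
    by (rule AE_distrD[OF X_meas[of 0]])
  then have bounded: "AE \<omega> in P. Y 0 \<omega> \<in> {- \<bar>C\<bar>..\<bar>C\<bar> + 1}"
    unfolding Y_def by eventually_elim auto
  have indep_Y: "indep_vars (\<lambda>_. borel) Y {..<Suc n}"
    unfolding Y_def by (rule indep_vars_subset[OF indep_vars_compose2[OF indep]]) auto
  interpret Hoeffding_ineq_iid P "{..<Suc n}" Y "Y 0" "- \<bar>C\<bar>" "\<bar>C\<bar> + 1" "\<integral>z. h z \<partial>\<mu>"
  proof unfold_locales
    show "(\<integral>z. h z \<partial>\<mu>) \<equiv> expectation (Y 0)"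
      unfolding Y_def using integral_distr[OF X_meas[of 0] h(1)] distr by simp
  qed (use same_distr bounded indep_Y Y_meas in \<open>simp_all add: Y_def\<close>)
  have "measure P {\<omega> \<in> space P. \<epsilon> \<le> \<bar>(\<Sum>j<Suc n. h (X j \<omega>)) / real (Suc n) - (\<integral>z. h z \<partial>\<mu>)\<bar>}
      \<le> 2 * exp (-2 * real (Suc n) * \<epsilon>\<^sup>2 / (2 * \<bar>C\<bar> + 1)\<^sup>2)"
    using Hoeffding_ineq_abs_ge'[OF \<epsilon>] by (simp add: Y_def add_nonneg_pos lessThan_empty_iff)
  also have "-2 * real (Suc n) * \<epsilon>\<^sup>2 / (2 * \<bar>C\<bar> + 1)\<^sup>2 = real (Suc n) * (-2 * \<epsilon>\<^sup>2 / (2 * \<bar>C\<bar> + 1)\<^sup>2)"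
    by (simp only: times_divide_eq_right mult.assoc mult.commute mult.left_commute)
  also have "exp \<dots> = exp (-2 * \<epsilon>\<^sup>2 / (2 * \<bar>C\<bar> + 1)\<^sup>2) ^ Suc n"
    by (rule exp_of_nat_mult)
  finally show ?thesis .
qed

lemma AE_eventually_average_close:
  fixes P :: "'b measure" and X :: "nat \<Rightarrow> 'b \<Rightarrow> 'a::topological_space" and h :: "'a \<Rightarrow> real"
  assumes P: "prob_space P" "\<forall>i. X i \<in> borel_measurable P"
      "prob_space.indep_vars P (\<lambda>_. borel) X UNIV" "\<forall>i. distr P borel (X i) = \<mu>"
    and h: "h \<in> borel_measurable borel" "AE z in \<mu>. \<bar>h z\<bar> \<le> C" and \<epsilon>: "0 < \<epsilon>"
  shows "AE \<omega> in P. \<forall>\<^sub>F n in sequentially. \<bar>(\<Sum>j<n. h (X j \<omega>)) / n - (\<integral>z. h z \<partial>\<mu>)\<bar> < \<epsilon>"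
proof -
  interpret prob_space P by (rule P(1))
  define A where "A n = {\<omega> \<in> space P. \<epsilon> \<le> \<bar>(\<Sum>j<Suc n. h (X j \<omega>)) / real (Suc n) - (\<integral>z. h z \<partial>\<mu>)\<bar>}" for n
  define q where "q = exp (-2 * \<epsilon>\<^sup>2 / (2 * \<bar>C\<bar> + 1)\<^sup>2)"
  have [measurable]: "X i \<in> borel_measurable P" for i
    using P(2) by auto
  note h(1)[measurable]
  have "A n \<in> sets P" for n
    unfolding A_def by measurable
  moreover have "summable (\<lambda>n. 2 * q ^ Suc n)"
    using summable_mult[OF summable_geometric[of q], of "2 * q"] \<epsilon> by (simp add: q_def mult.assoc add_nonneg_pos)
  then have "summable (\<lambda>n. measure P (A n))"
    by (rule summable_comparison_test[rotated])
       (use Hoeffding_average_tail[OF P h less_imp_le[OF \<epsilon>]] in \<open>auto simp: A_def q_def\<close>)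
  ultimately have "AE \<omega> in P. \<forall>\<^sub>F n in sequentially. \<omega> \<in> space P - A n"
    by (intro borel_cantelli_AE1) (auto simp: emeasure_eq_measure)
  then show ?thesis
  proof eventually_elim
    case (elim \<omega>)
    then have "\<forall>\<^sub>F n in sequentially. \<bar>(\<Sum>j<Suc n. h (X j \<omega>)) / real (Suc n) - (\<integral>z. h z \<partial>\<mu>)\<bar> < \<epsilon>"
      by (auto simp: A_def not_le elim: eventually_mono)
    then show ?case
      by (subst eventually_sequentially_Suc[symmetric]) simp
  qed
qed

lemma bounded_strong_law:
  fixes P :: "'b measure" and X :: "nat \<Rightarrow> 'b \<Rightarrow> 'a::topological_space" and h :: "'a \<Rightarrow> real"
  assumes "prob_space P" "\<forall>i. X i \<in> borel_measurable P"
    and "prob_space.indep_vars P (\<lambda>_. borel) X UNIV" "\<forall>i. distr P borel (X i) = \<mu>"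
    and "h \<in> borel_measurable borel" "AE z in \<mu>. \<bar>h z\<bar> \<le> C"
  shows "AE \<omega> in P. (\<lambda>n. (\<Sum>j<n. h (X j \<omega>)) / n) \<longlonglongrightarrow> (\<integral>z. h z \<partial>\<mu>)"
proof -
  have "AE \<omega> in P. \<forall>k. \<forall>\<^sub>F n in sequentially. \<bar>(\<Sum>j<n. h (X j \<omega>)) / n - (\<integral>z. h z \<partial>\<mu>)\<bar> < 1 / Suc k"
    by (subst AE_all_countable) (intro allI AE_eventually_average_close[OF assms]; simp)
  then show ?thesis
  proof eventually_elim
    case (elim \<omega>)
    show ?case
    proof (rule tendstoI)
      fix e :: real assume "0 < e"
      then obtain k where "1 / Suc k < e"
        using nat_approx_posE by blast
      then show "\<forall>\<^sub>F n in sequentially. dist ((\<Sum>j<n. h (X j \<omega>)) / n) (\<integral>z. h z \<partial>\<mu>) < e"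
        using elim[rule_format, of k] by (auto simp: dist_real_def elim: eventually_mono)
    qed
  qed
qed

lemma AE_uniform_limit_average:
  fixes P :: "'b measure" and X :: "nat \<Rightarrow> 'b \<Rightarrow> 'a::euclidean_space" and H :: "'c::metric_space \<times> 'a \<Rightarrow> real"
  assumes P: "prob_space P" "\<forall>i. X i \<in> borel_measurable P"
      "prob_space.indep_vars P (\<lambda>_. borel) X UNIV" "\<forall>i. distr P borel (X i) = \<mu>"
    and \<mu>: "compactly_supported_prob_space \<mu> K"
    and \<Theta>: "compact \<Theta>" and H: "continuous_on (\<Theta> \<times> K) H" "\<And>t. t \<in> \<Theta> \<Longrightarrow> continuous_on UNIV (\<lambda>z. H (t, z))"
    and XK: "AE \<omega> in P. \<forall>j. X j \<omega> \<in> K"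
  shows "AE \<omega> in P. uniform_limit \<Theta> (\<lambda>n t. (\<Sum>j<n. H (t, X j \<omega>)) / n) (\<lambda>t. \<integral>z. H (t, z) \<partial>\<mu>) sequentially"
proof -
  interpret compactly_supported_prob_space \<mu> K by (rule \<mu>)
  obtain C where C: "\<forall>p\<in>\<Theta> \<times> K. \<bar>H p\<bar> \<le> C"
    using compact_imp_bounded[OF compact_continuous_image[OF H(1) compact_Times[OF \<Theta> compact_support]]]
    unfolding bounded_iff by auto
  have "\<exists>T. finite T \<and> T \<subseteq> \<Theta> \<and> (\<forall>t\<in>\<Theta>. \<exists>t'\<in>T. \<forall>z\<in>K. \<bar>H (t, z) - H (t', z)\<bar> < 1 / Suc k)" for k
    by (rule compact_Times_finite_net[OF \<Theta> compact_support H(1)]) simp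
  then obtain T where T: "\<And>k. finite (T k) \<and> T k \<subseteq> \<Theta> \<and>
      (\<forall>t\<in>\<Theta>. \<exists>t'\<in>T k. \<forall>z\<in>K. \<bar>H (t, z) - H (t', z)\<bar> < 1 / Suc k)"
    by metis
  have "AE \<omega> in P. \<forall>k. \<forall>t\<in>T k. (\<lambda>n. (\<Sum>j<n. H (t, X j \<omega>)) / n) \<longlonglongrightarrow> (\<integral>z. H (t, z) \<partial>\<mu>)"
  proof (subst AE_all_countable, intro allI AE_finite_allI)
    fix k t assume "t \<in> T k"
    then have t: "t \<in> \<Theta>"
      using T by blast
    have "AE z in \<mu>. \<bar>H (t, z)\<bar> \<le> C"
      using AE_in_support by eventually_elim (use C t in blast)
    moreover have "(\<lambda>z. H (t, z)) \<in> borel_measurable borel"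
      using H(2)[OF t] by (rule borel_measurable_continuous_onI)
    ultimately show "AE \<omega> in P. (\<lambda>n. (\<Sum>j<n. H (t, X j \<omega>)) / n) \<longlonglongrightarrow> (\<integral>z. H (t, z) \<partial>\<mu>)"
      by (intro bounded_strong_law[OF P])
  qed (use T in blast)
  with XK show ?thesis
  proof eventually_elim
    case (elim \<omega>)
    show ?case
    proof (rule uniform_limitI)
      fix e :: real assume "0 < e"
      then obtain k where k: "1 / Suc k < e / 3"
        by (metis nat_approx_posE zero_less_divide_iff zero_less_numeral)
      have "\<forall>\<^sub>F n in sequentially. \<forall>t\<in>\<Theta>. \<bar>(\<Sum>j<n. H (t, X j \<omega>)) / n - (\<integral>z. H (t, z) \<partial>\<mu>)\<bar> < 3 * (1 / Suc k)"
        using T[of k] elim(2) by (intro eventually_average_close_of_net[OF elim(1) H(2)]) auto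
      then show "\<forall>\<^sub>F n in sequentially. \<forall>t\<in>\<Theta>. dist ((\<Sum>j<n. H (t, X j \<omega>)) / n) (\<integral>z. H (t, z) \<partial>\<mu>) < e"
        by eventually_elim (use k in \<open>auto simp: dist_real_def\<close>)
    qed
  qed
qed

lemma Icc_subset_inverse_Suc_Icc:
  assumes "0 < a"
  obtains k where "{a..b} \<subseteq> {1 / real (Suc k)..real (Suc k)}"
proof -
  obtain k1 where k1: "1 / real (Suc k1) < a"
    using assms nat_approx_posE by blast
  obtain k2 where k2: "b \<le> real k2"
    using real_arch_simple by blast
  have "1 / real (Suc (max k1 k2)) \<le> 1 / real (Suc k1)"
    by (simp add: frac_le)
  with k1 k2 show ?thesis
    by (intro that[of "max k1 k2"]) auto
qed

lemma AE_uniform_limit_gauss_integral_emp_measure: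
  fixes P :: "'b measure" and X :: "nat \<Rightarrow> 'b \<Rightarrow> 'a::euclidean_space" and g :: "real \<Rightarrow> real"
  assumes P: "prob_space P" "\<forall>i. X i \<in> borel_measurable P"
      "prob_space.indep_vars P (\<lambda>_. borel) X UNIV" "\<forall>i. distr P borel (X i) = \<mu>"
    and \<mu>: "compactly_supported_prob_space \<mu> K"
    and C: "compact C" and XK: "AE \<omega> in P. \<forall>j. X j \<omega> \<in> K" and g: "continuous_on UNIV g"
  shows "AE \<omega> in P. \<forall>a>0. \<forall>b. uniform_limit (C \<times> {a..b})
      (\<lambda>n t. \<integral>z. g ((norm (fst t - z))\<^sup>2) * exp (- (1 / (2 * (snd t)\<^sup>2)) * (norm (fst t - z))\<^sup>2) \<partial>emp_measure (\<lambda>j. X j \<omega>) n)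
      (\<lambda>t. \<integral>z. g ((norm (fst t - z))\<^sup>2) * exp (- (1 / (2 * (snd t)\<^sup>2)) * (norm (fst t - z))\<^sup>2) \<partial>\<mu>) sequentially"
proof -
  interpret compactly_supported_prob_space \<mu> K by (rule \<mu>)
  define \<Theta> where "\<Theta> k = C \<times> {1 / real (Suc k)..real (Suc k)}" for k
  define H where "H p = g ((norm (fst (fst p) - snd p))\<^sup>2) * exp (- (1 / (2 * (snd (fst p))\<^sup>2)) * (norm (fst (fst p) - snd p))\<^sup>2)"
    for p :: "('a \<times> real) \<times> 'a"
  have \<Theta>_pos: "0 < snd t" if "t \<in> \<Theta> k" for t k
    using that by (auto simp: \<Theta>_def intro: less_le_trans[of 0 "1 / real (Suc k)"])
  have "AE \<omega> in P. \<forall>k. uniform_limit (\<Theta> k) (\<lambda>n t. (\<Sum>j<n. H (t, X j \<omega>)) / n) (\<lambda>t. \<integral>z. H (t, z) \<partial>\<mu>) sequentially"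
  proof (subst AE_all_countable, intro allI AE_uniform_limit_average[OF P \<mu> _ _ _ XK])
    show "compact (\<Theta> k)" for k
      unfolding \<Theta>_def by (intro compact_Times C compact_Icc)
    show "continuous_on (\<Theta> k \<times> K) H" for k
      unfolding H_def using \<Theta>_pos
      by (auto intro!: continuous_intros continuous_on_compose2[OF g] simp: less_imp_neq[symmetric])
    show "continuous_on UNIV (\<lambda>z. H (t, z))" if "t \<in> \<Theta> k" for t k
      unfolding H_def using \<Theta>_pos[OF that] by (intro continuous_intros continuous_on_compose2[OF g]) auto
  qed
  then show ?thesis
  proof eventually_elim
    case (elim \<omega>)
    show ?case
    proof (intro allI impI)
      fix a b :: real assume "0 < a"
      then obtain k where "{a..b} \<subseteq> {1 / real (Suc k)..real (Suc k)}"
        by (rule Icc_subset_inverse_Suc_Icc)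
      then have "C \<times> {a..b} \<subseteq> \<Theta> k"
        by (auto simp: \<Theta>_def)
      from uniform_limit_on_subset[OF elim[rule_format] this]
      show "uniform_limit (C \<times> {a..b})
          (\<lambda>n t. \<integral>z. g ((norm (fst t - z))\<^sup>2) * exp (- (1 / (2 * (snd t)\<^sup>2)) * (norm (fst t - z))\<^sup>2) \<partial>emp_measure (\<lambda>j. X j \<omega>) n)
          (\<lambda>t. \<integral>z. g ((norm (fst t - z))\<^sup>2) * exp (- (1 / (2 * (snd t)\<^sup>2)) * (norm (fst t - z))\<^sup>2) \<partial>\<mu>) sequentially"
        unfolding H_def by (intro uniform_limit_emp_measure_integral) simp
    qed
  qed
qed

lemma AE_uniform_limit_F_fun_emp_measure:
  fixes P :: "'b measure" and X :: "nat \<Rightarrow> 'b \<Rightarrow> 'a::euclidean_space"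
  assumes P: "prob_space P" "\<forall>i. X i \<in> borel_measurable P"
      "prob_space.indep_vars P (\<lambda>_. borel) X UNIV" "\<forall>i. distr P borel (X i) = \<mu>"
    and \<mu>: "compactly_supported_prob_space \<mu> K"
    and C: "compact C" and XK: "AE \<omega> in P. \<forall>j. X j \<omega> \<in> K"
  shows "AE \<omega> in P. \<forall>a>0. \<forall>b. uniform_limit (C \<times> {a..b})
           (\<lambda>n t. F_fun \<rho> (emp_measure (\<lambda>j. X j \<omega>) n) (fst t) (snd t)) (\<lambda>t. F_fun \<rho> \<mu> (fst t) (snd t)) sequentially"
  using AE_uniform_limit_gauss_integral_emp_measure[OF assms continuous_on_const[of UNIV 1]]
    AE_uniform_limit_gauss_integral_emp_measure[OF assms continuous_on_id[of UNIV]] XK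
proof eventually_elim
  case (elim \<omega>)
  have N: "\<forall>\<^sub>F n in sequentially. compactly_supported_prob_space (emp_measure (\<lambda>j. X j \<omega>) n) K"
    using eventually_compactly_supported_emp_measure[OF compactly_supported_prob_space.compact_support[OF \<mu>]]
      elim(3) by simp
  show ?case
    using elim(1,2)
    by (auto simp: gauss_mass_def gauss_moment_def intro!: compactly_supported_prob_space.uniform_limit_F_fun[OF \<mu> C _ N])
qed

theorem proposition3p9:
  fixes \<mu> :: "'a::euclidean_space measure"
    and f :: "'a \<Rightarrow> real"
    and \<rho> :: real
    and P :: "'b measure"
    and X :: "nat \<Rightarrow> 'b \<Rightarrow> 'a"
  assumes "prob_space \<mu>"
    and "\<forall>x. f x \<ge> 0"
    and "C1_real f"
    and "\<mu> = density lborel (\<lambda>x. ennreal (f x))"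
    and "\<exists>K. compact K \<and> emeasure \<mu> (UNIV - K) = 0"
    and "0 < \<rho>" and "\<rho> < 1"
    and "prob_space P"
    and "\<forall>i. X i \<in> borel_measurable P"
    and "prob_space.indep_vars P (\<lambda>_. borel) X UNIV"
    and "\<forall>i. distr P borel (X i) = \<mu>"
  shows "AE \<omega> in P.
    (\<lambda>n. Max ((\<lambda>i. \<bar>sigma_star \<rho> (emp_measure (\<lambda>j. X j \<omega>) n) (X i \<omega>)
                       - sigma_star \<rho> \<mu> (X i \<omega>)\<bar>) ` {..<n}))
    \<longlonglongrightarrow> 0"
proof -
  obtain K where K: "compact K" "emeasure \<mu> (UNIV - K) = 0"
    using assms(5) by blast
  have f: "continuous_on UNIV f"
    using assms(3) by (rule C1_real_imp_continuous)
  define S where "S = closure {y. 0 < f y}"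
  have \<mu>: "compactly_supported_prob_space \<mu> K"
    using compactly_supported_density[of f K] assms(1,4) K by simp
  have S: "compact S" "S \<subseteq> K"
    unfolding S_def using compact_closure_density_pos[OF f K(1)]
      closure_density_pos_subset[OF f compact_imp_closed[OF K(1)]] assms(4) K(2) by simp_all
  have roots: "\<forall>x\<in>S. \<exists>\<sigma>>0. F_fun \<rho> \<mu> x \<sigma> = 0"
    using F_fun_density_has_root[OF _ f K(1) _ assms(6,7)] assms(1,4) K(2) by (simp add: S_def)
  have XS: "AE \<omega> in P. \<forall>j. X j \<omega> \<in> S"
    unfolding S_def using AE_in_closure_density_pos[OF assms(9)] assms(4,11) borel_measurable_continuous_onI[OF f]
    by simp
  then have "AE \<omega> in P. \<forall>j. X j \<omega> \<in> K"
    by eventually_elim (use S(2) in blast)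
  with XS AE_uniform_limit_F_fun_emp_measure[OF assms(8-11) \<mu> S(1) this, of \<rho>]
  show ?thesis
  proof eventually_elim
    case (elim \<omega>)
    show ?case
      by (rule Max_abs_diff_tendsto_0[OF compactly_supported_prob_space.uniform_limit_sigma_star[OF
            \<mu> assms(6,7) S(1) roots eventually_compactly_supported_emp_measure[OF K(1) elim(3)]
            elim(2)[rule_format]] elim(1)])
  qed
qed

end
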